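(* For every $n\ge0$, $$e_n(c)=\frac{n!}{(2n-1)!!}\prod_{m=1}^n\Big(c-\frac{m^2-1}4\Big),$$ where $e_n(c)\in\mathbb C[c]$ is obtained by substituting $y=c$ into $e_n(y)\in\mathbb C[c][y]$ (and $(-1)!!=1$).
   Context: Chord diagrams and $w_{\mathfrak{sl}_2}(D)=\sum_\varphi x_{\varphi(p_1)}\cdots x_{\varphi(p_{2n})}\in\mathbb C[c]$ ($x_1,x_2,x_3$ the basis $\tfrac12\begin{pmatrix}0&1\\1&0\end{pmatrix},\tfrac12\begin{pmatrix}0&-i\\ i&0\end{pmatrix},\tfrac12\begin{pmatrix}1&0\\0&-1\end{pmatrix}$ of $\mathfrak{sl}_2$, $c=\sum x_i^2$, $p_i$ endpoints in order from a cut point, $\varphi$ over maps chords$\to\{1,2,3\}$). A share: two oriented intervals (strand 1, strand 2) with finitely many chords, up to orientation-preserving diffeomorphisms of each strand. Join $(I,H)$: chord diagram whose circle reads strand 1 of $I$, strand 1 of $H$, strand 2 of $I$, strand 2 of $H$. $\mathcal S$: quotient of the $\mathbb C$-span of shares by $I\sim I'$ iff $w_{\mathfrak{sl}_2}((I,H))=w_{\mathfrak{sl}_2}((I',H))$ for all $H$. Cross product $I\times H$: strand 1 = strand 1 of $I$ then strand 1 of $H$; strand 2 = strand 2 of $H$ then strand 2 of $I$; it gives $\mathcal S\cong\mathbb C[c][y]$ with $c$ the class of a one-arch share and $y$ of the one-bridge share. $U$: the operator on $\mathcal S$ adding an arch on strand 1 whose endpoints precede and follow all other endpoints on strand 1.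 For $m\ge0$, $e_m\in\mathcal S$ is the unique monic polynomial in $y$ of degree $m$ (coefficients in $\mathbb C[c]$) with $Ue_m=(c-\frac{m(m+1)}2)e_m$. *)

theory Defs
  imports Complex_Main "HOL-Computational_Algebra.Polynomial" "HOL-Library.FuncSet"
begin

text \<open>A chord diagram (cut at a point) is its word of chord endpoints: a list of chord labels,
  each label occurring exactly twice.  The sl2 weight system is evaluated in the irreducible
  representation V_k of sl2 (dimension k+1, basis v_0..v_k), where H v_j = (k-2j) v_j,
  E v_j = j(k-j+1) v_(j-1), F v_j = v_(j+1).  The basis elements are
  x_1 = (E+F)/2, x_2 = i(F-E)/2, x_3 = H/2 (indices a = 0,1,2 here);
  for k = 1 these are exactly the matrices of the paper.\<close>

definition rho :: "nat \<Rightarrow> nat \<Rightarrow> nat \<Rightarrow> nat \<Rightarrow> complex" where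
  "rho k a i j =
     (let E = (if i + 1 = j then of_nat (j * (k + 1 - j)) else 0);
          F = (if i = j + 1 then 1 else 0);
          H = (if i = j then of_int (int k - 2 * int j) else 0)
      in if a = 0 then (E + F) / 2
         else if a = 1 then \<i> * (F - E) / 2
         else H / 2)"

fun wordmat :: "nat \<Rightarrow> (nat \<Rightarrow> nat) \<Rightarrow> nat list \<Rightarrow> nat \<Rightarrow> nat \<Rightarrow> complex" where
  "wordmat k \<phi> [] i j = (if i = j then 1 else 0)"
| "wordmat k \<phi> (l # w) i j = (\<Sum>m\<le>k. rho k (\<phi> l) i m * wordmat k \<phi> w m j)"

definition wsl2 :: "nat \<Rightarrow> nat list \<Rightarrow> nat \<Rightarrow> nat \<Rightarrow> complex" where
  "wsl2 k D i j = (\<Sum>\<phi> \<in> PiE (set D) (\<lambda>_. {0, 1, 2}). wordmat k \<phi> D i j)"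

text \<open>A share: (strand 1, strand 2), each a list of chord labels read along the orientation;
  each label occurs exactly twice in total.\<close>
type_synonym share = "nat list \<times> nat list"

definition is_share :: "share \<Rightarrow> bool" where
  "is_share s = (\<forall>l. count_list (fst s @ snd s) l \<in> {0, 2})"

definition relL :: "nat \<Rightarrow> nat" where "relL l = 2 * l"
definition relR :: "nat \<Rightarrow> nat" where "relR l = 2 * l + 1"

definition join :: "share \<Rightarrow> share \<Rightarrow> nat list" where
  "join I H = map relL (fst I) @ map relR (fst H) @ map relL (snd I) @ map relR (snd H)"

definition cross :: "share \<Rightarrow> share \<Rightarrow> share" where
  "cross I H = (map relL (fst I) @ map relR (fst H), map relR (snd H) @ map relL (snd I))"

definition arch :: share where "arch = ([0, 0], [])"
definition bridge :: share where "bridge = ([0], [0])"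

fun cross_pow :: "share \<Rightarrow> nat \<Rightarrow> share" where
  "cross_pow s 0 = ([], [])"
| "cross_pow s (Suc n) = cross s (cross_pow s n)"

text \<open>The share representing the monomial c^i y^j.\<close>
definition mono :: "nat \<Rightarrow> nat \<Rightarrow> share" where
  "mono i j = cross (cross_pow arch i) (cross_pow bridge j)"

type_synonym comb = "(complex \<times> share) list"

text \<open>The class in S of a combination: I ~ I' iff w_sl2((I,H)) = w_sl2((I',H)) for all H;
  equality in U(sl2) is tested in all irreducible representations V_k.
  Only genuine shares H are tested.\<close>
definition cls :: "comb \<Rightarrow> share \<Rightarrow> nat \<Rightarrow> nat \<Rightarrow> nat \<Rightarrow> complex" where
  "cls X = (\<lambda>H k i j. if is_share H then (\<Sum>(a, I) \<leftarrow> X. a * wsl2 k (join I H) i j) else 0)"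

text \<open>The operator U: add an arch on strand 1 enclosing all other endpoints on strand 1.\<close>
definition Ush :: "share \<Rightarrow> share" where
  "Ush s = (0 # map Suc (fst s) @ [0], map Suc (snd s))"

definition Uop :: "comb \<Rightarrow> comb" where
  "Uop X = map (\<lambda>(a, I). (a, Ush I)) X"

text \<open>The element of S corresponding to a polynomial in C[c][y] (iso S = C[c][y]).\<close>
definition realize :: "complex poly poly \<Rightarrow> comb" where
  "realize q = [(coeff (coeff q j) i, mono i j). j \<leftarrow> [0..<Suc (degree q)],
                                               i \<leftarrow> [0..<Suc (degree (coeff q j))]]"

end

theory Submission
  imports Defs "HOL-Library.Function_Algebras"
begin

text \<open>Everything is evaluated in the irreducible representations \<open>V\<^sub>k\<close>, where \<open>c\<close> acts as
  \<open>c\<^sub>k = k(k+2)/4\<close>. Closing a share \<open>I\<close> against \<open>H\<close> and taking the trace pairs \<open>I\<close> with a linear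
  map on \<open>End V\<^sub>k\<close>; a bridge in \<open>H\<close> contributes \<open>\<Omega> Z = \<Sum>\<^sub>a x\<^sub>a Z x\<^sub>a\<close>, and \<open>U\<close> composes with
  \<open>\<Omega>\<close> on the other side. So the eigen-equation of \<open>e\<^sub>n\<close> says that \<open>\<langle>e\<^sub>n, p(\<Omega>)\<rangle> = p(\<lambda>\<^sub>n) \<langle>e\<^sub>n, 1\<rangle>\<close>
  for every polynomial \<open>p\<close>, where \<open>\<lambda>\<^sub>l = c\<^sub>k - l(l+1)/2\<close>.
  On the \<open>\<Omega>\<close>-eigenvectors that occur, \<open>\<lambda>\<^sub>l\<close> is the eigenvalue on the copy of \<open>V\<^sub>2\<^sub>l\<close> in
  \<open>End V\<^sub>k\<close>, and right multiplication by \<open>x\<^sub>a\<close> only reaches the eigenvalues \<open>\<lambda>\<^sub>l\<^sub>-\<^sub>1, \<lambda>\<^sub>l, \<lambda>\<^sub>l\<^sub>+\<^sub>1\<close>.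
  Choosing for \<open>p\<close> the Lagrange polynomial that is \<open>1\<close> at \<open>\<lambda>\<^sub>n\<close> and \<open>0\<close> at \<open>\<lambda>\<^sub>0, \<dots>, \<lambda>\<^sub>n\<^sub>-\<^sub>1\<close>,
  this forces \<open>\<langle>y\<^sup>j, p(\<Omega>)\<rangle> = 0\<close> for \<open>j < n\<close>, while \<open>\<langle>y\<^sup>n, p(\<Omega>)\<rangle>\<close> is \<open>(k+1)\<close> times a product
  of explicit factors \<open>\<gamma>\<^sub>l\<close>. Since \<open>\<langle>e\<^sub>n, 1\<rangle> = (k+1) e\<^sub>n(c\<^sub>k)\<close>, both sides of the claimed identity
  agree at the infinitely many points \<open>c\<^sub>k\<close>.\<close>

section \<open>Square matrices of size \<open>k+1\<close>\<close>

text \<open>A matrix is a function \<open>nat \<Rightarrow> nat \<Rightarrow> complex\<close>; only the entries with indices \<open>\<le> k\<close> are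
  meaningful, and the products below are truncated accordingly.\<close>

type_synonym cmat = "nat \<Rightarrow> nat \<Rightarrow> complex"

definition mmult :: "nat \<Rightarrow> cmat \<Rightarrow> cmat \<Rightarrow> cmat" where
  "mmult k A B = (\<lambda>i j. if i \<le> k \<and> j \<le> k then (\<Sum>m\<le>k. A i m * B m j) else 0)"

definition mone :: "nat \<Rightarrow> cmat" where
  "mone k = (\<lambda>i j. if i = j \<and> i \<le> k then 1 else 0)"

definition is_mat :: "nat \<Rightarrow> cmat \<Rightarrow> bool" where
  "is_mat k A \<longleftrightarrow> (\<forall>i j. k < i \<or> k < j \<longrightarrow> A i j = 0)"

definition mscale :: "complex \<Rightarrow> cmat \<Rightarrow> cmat" where
  "mscale a A = (\<lambda>i j. a * A i j)"

definition mtrace :: "nat \<Rightarrow> cmat \<Rightarrow> complex" where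
  "mtrace k A = (\<Sum>i\<le>k. A i i)"

lemma cmat_zero_eq [simp]: "(\<lambda>a b. (0::complex)) = (0::cmat)"
  by (simp add: fun_eq_iff)

lemma cmat_add_eq [simp]: "(\<lambda>a b. A a b + B a b) = (A + B :: cmat)"
  by (simp add: fun_eq_iff)

lemma cmat_diff_eq [simp]: "(\<lambda>a b. A a b - B a b) = (A - B :: cmat)"
  by (simp add: fun_eq_iff)

lemma sum_fun_apply: "(\<Sum>x\<in>S. f x) i = (\<Sum>x\<in>S. f x i)"
  by (induction S rule: infinite_finite_induct) auto

lemma mmult_assoc: "mmult k (mmult k A B) C = mmult k A (mmult k B C)"
proof (intro ext)
  fix i j
  show "mmult k (mmult k A B) C i j = mmult k A (mmult k B C) i j"
  proof (cases "i \<le> k \<and> j \<le> k")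
    case True
    have "mmult k (mmult k A B) C i j = (\<Sum>m\<le>k. \<Sum>p\<le>k. A i p * B p m * C m j)"
      using True by (simp add: mmult_def sum_distrib_right)
    also have "\<dots> = (\<Sum>p\<le>k. \<Sum>m\<le>k. A i p * B p m * C m j)"
      by (rule sum.swap)
    also have "\<dots> = mmult k A (mmult k B C) i j"
      using True by (simp add: mmult_def sum_distrib_left mult.assoc)
    finally show ?thesis .
  qed (auto simp: mmult_def)
qed

lemma mmult_add_right: "mmult k A (B + C) = mmult k A B + mmult k A C"
  by (auto simp: mmult_def fun_eq_iff distrib_left sum.distrib)

lemma mmult_add_left: "mmult k (A + B) C = mmult k A C + mmult k B C"
  by (auto simp: mmult_def fun_eq_iff distrib_right sum.distrib)

lemma mmult_diff_right: "mmult k A (B - C) = mmult k A B - mmult k A C"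
  by (auto simp: mmult_def fun_eq_iff right_diff_distrib sum_subtractf)

lemma mmult_diff_left: "mmult k (A - B) C = mmult k A C - mmult k B C"
  by (auto simp: mmult_def fun_eq_iff left_diff_distrib sum_subtractf)

lemma mmult_mscale_right: "mmult k A (mscale a B) = mscale a (mmult k A B)"
  by (auto simp: mmult_def mscale_def fun_eq_iff sum_distrib_left mult.left_commute)

lemma mmult_mscale_left: "mmult k (mscale a A) B = mscale a (mmult k A B)"
  by (auto simp: mmult_def mscale_def fun_eq_iff sum_distrib_left mult.assoc)

lemma mmult_zero_right [simp]: "mmult k A 0 = 0"
  by (auto simp: mmult_def fun_eq_iff)

lemma mmult_zero_left [simp]: "mmult k 0 A = 0"
  by (auto simp: mmult_def fun_eq_iff)

lemma mmult_sum_right: "mmult k A (\<Sum>x\<in>S. f x) = (\<Sum>x\<in>S. mmult k A (f x))"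
  by (auto simp: fun_eq_iff mmult_def sum_fun_apply sum_distrib_left intro: sum.swap)

lemma mmult_sum_left: "mmult k (\<Sum>x\<in>S. f x) A = (\<Sum>x\<in>S. mmult k (f x) A)"
  by (auto simp: fun_eq_iff mmult_def sum_fun_apply sum_distrib_right intro: sum.swap)

lemmas mmult_linear =
  mmult_add_left mmult_add_right mmult_diff_left mmult_diff_right mmult_mscale_left mmult_mscale_right

lemma mscale_add: "mscale a (A + B) = mscale a A + mscale a B"
  by (auto simp: mscale_def fun_eq_iff distrib_left)

lemma mscale_diff: "mscale a (A - B) = mscale a A - mscale a B"
  by (auto simp: mscale_def fun_eq_iff right_diff_distrib)

lemma mscale_mscale: "mscale a (mscale b A) = mscale (a * b) A"
  by (auto simp: mscale_def fun_eq_iff)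

lemma mscale_add_left: "mscale (a + b) A = mscale a A + mscale b A"
  by (auto simp: mscale_def fun_eq_iff distrib_right)

lemma mscale_one [simp]: "mscale 1 A = A"
  by (auto simp: mscale_def fun_eq_iff)

lemma mscale_zero [simp]: "mscale 0 A = 0" "mscale a 0 = 0"
  by (auto simp: mscale_def fun_eq_iff)

lemma mscale_minus_one [simp]: "mscale (-1) A = - A"
  by (simp add: mscale_def fun_eq_iff)

lemma mscale_sum: "mscale a (\<Sum>x\<in>S. f x) = (\<Sum>x\<in>S. mscale a (f x))"
  by (auto simp: fun_eq_iff mscale_def sum_fun_apply sum_distrib_left)

lemma is_mat_mmult [simp]: "is_mat k (mmult k A B)"
  by (auto simp: is_mat_def mmult_def)

lemma is_mat_mone [simp]: "is_mat k (mone k)"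
  by (auto simp: is_mat_def mone_def)

lemma is_mat_add [simp]: "is_mat k A \<Longrightarrow> is_mat k B \<Longrightarrow> is_mat k (A + B)"
  by (auto simp: is_mat_def)

lemma is_mat_diff [simp]: "is_mat k A \<Longrightarrow> is_mat k B \<Longrightarrow> is_mat k (A - B)"
  by (auto simp: is_mat_def)

lemma is_mat_mscale [simp]: "is_mat k A \<Longrightarrow> is_mat k (mscale a A)"
  by (auto simp: is_mat_def mscale_def)

lemma is_mat_zero [simp]: "is_mat k 0"
  by (auto simp: is_mat_def)

lemma is_mat_sum [simp]: "(\<And>x. x \<in> S \<Longrightarrow> is_mat k (f x)) \<Longrightarrow> is_mat k (\<Sum>x\<in>S. f x)"
  by (auto simp: is_mat_def sum_fun_apply)

lemma sum_atMost_single: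
  fixes f :: "nat \<Rightarrow> complex"
  assumes "\<And>m. m \<noteq> p \<Longrightarrow> f m = 0"
  shows "(\<Sum>m\<le>k. f m) = (if p \<le> k then f p else 0)"
proof -
  have "(\<Sum>m\<le>k. f m) = (\<Sum>m\<le>k. if m = p then f p else 0)"
    by (rule sum.cong) (use assms in auto)
  then show ?thesis
    by simp
qed

lemma mmult_mone_left: "is_mat k A \<Longrightarrow> mmult k (mone k) A = A"
  by (auto simp: fun_eq_iff mmult_def mone_def is_mat_def if_distrib[of "\<lambda>x. x * _"] cong: if_cong)

lemma mmult_mone_right: "is_mat k A \<Longrightarrow> mmult k A (mone k) = A"
  by (auto simp: fun_eq_iff mmult_def mone_def is_mat_def if_distrib[of "\<lambda>x. _ * x"] cong: if_cong)

lemma mtrace_add: "mtrace k (A + B) = mtrace k A + mtrace k B"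
  by (simp add: mtrace_def sum.distrib)

lemma mtrace_mscale: "mtrace k (mscale a A) = a * mtrace k A"
  by (simp add: mtrace_def mscale_def sum_distrib_left)

lemma mtrace_sum: "mtrace k (\<Sum>x\<in>S. f x) = (\<Sum>x\<in>S. mtrace k (f x))"
  by (simp add: mtrace_def sum_fun_apply sum.swap[of _ S])

lemma mtrace_mone: "mtrace k (mone k) = of_nat (k + 1)"
  by (simp add: mtrace_def mone_def)

lemma mtrace_mmult_commute: "mtrace k (mmult k A B) = mtrace k (mmult k B A)"
proof -
  have "mtrace k (mmult k A B) = (\<Sum>i\<le>k. \<Sum>m\<le>k. A i m * B m i)"
    by (simp add: mtrace_def mmult_def)
  also have "\<dots> = (\<Sum>m\<le>k. \<Sum>i\<le>k. B m i * A i m)"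
    by (subst sum.swap) (simp add: mult.commute)
  also have "\<dots> = mtrace k (mmult k B A)"
    by (simp add: mtrace_def mmult_def)
  finally show ?thesis .
qed

lemma mtrace_mmult_mone: "mtrace k (mmult k A (mone k)) = mtrace k A"
proof -
  have "(\<Sum>m\<le>k. A i m * mone k m i) = A i i" if "i \<le> k" for i
    using sum_atMost_single[of i "\<lambda>m. A i m * mone k m i" k] that by (simp add: mone_def)
  then show ?thesis
    by (simp add: mtrace_def mmult_def)
qed

section \<open>The action of \<open>sl\<^sub>2\<close> on \<open>V\<^sub>k\<close>\<close>

definition E_mat :: "nat \<Rightarrow> cmat" where
  "E_mat k = (\<lambda>i j. if i \<le> k \<and> j \<le> k \<and> i + 1 = j then of_nat (j * (k + 1 - j)) else 0)"

definition F_mat :: "nat \<Rightarrow> cmat" where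
  "F_mat k = (\<lambda>i j. if i \<le> k \<and> j \<le> k \<and> i = j + 1 then 1 else 0)"

definition H_mat :: "nat \<Rightarrow> cmat" where
  "H_mat k = (\<lambda>i j. if i \<le> k \<and> j \<le> k \<and> i = j then of_int (int k - 2 * int j) else 0)"

definition x_mat :: "nat \<Rightarrow> nat \<Rightarrow> cmat" where
  "x_mat k a = (\<lambda>i j. if i \<le> k \<and> j \<le> k then rho k a i j else 0)"

definition casimir :: "nat \<Rightarrow> complex" where
  "casimir k = of_nat (k * (k + 2)) / 4"

text \<open>Four times the Casimir element \<open>x\<^sub>1\<^sup>2 + x\<^sub>2\<^sup>2 + x\<^sub>3\<^sup>2\<close>.\<close>

definition casimir4_mat :: "nat \<Rightarrow> cmat" where
  "casimir4_mat k = mscale 4 (mmult k (F_mat k) (E_mat k)) + mscale 2 (H_mat k) + mmult k (H_mat k) (H_mat k)"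

lemma is_mat_EFH [simp]: "is_mat k (E_mat k)" "is_mat k (F_mat k)" "is_mat k (H_mat k)"
  by (auto simp: is_mat_def E_mat_def F_mat_def H_mat_def)

lemma is_mat_x_mat [simp]: "is_mat k (x_mat k a)"
  by (simp add: is_mat_def x_mat_def)

lemma x_mat_0: "x_mat k 0 = mscale (1/2) (E_mat k + F_mat k)"
  by (auto simp: fun_eq_iff x_mat_def rho_def mscale_def E_mat_def F_mat_def Let_def)

lemma x_mat_1: "x_mat k 1 = mscale (\<i>/2) (F_mat k - E_mat k)"
  by (auto simp: fun_eq_iff x_mat_def rho_def mscale_def E_mat_def F_mat_def Let_def)

lemma x_mat_2: "x_mat k 2 = mscale (1/2) (H_mat k)"
  by (auto simp: fun_eq_iff x_mat_def rho_def mscale_def H_mat_def Let_def)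

lemma E_mat_apply:
  "E_mat k i j = (if i \<le> k \<and> j \<le> k \<and> i + 1 = j then of_nat j * (of_nat k + 1 - of_nat j) else 0)"
  by (simp add: E_mat_def of_nat_diff)

lemma H_mat_apply:
  "H_mat k i j = (if i \<le> k \<and> j \<le> k \<and> i = j then of_int (int k - 2 * int j) else 0)"
  by (simp add: H_mat_def)

lemma mmult_E_F_apply:
  "mmult k (E_mat k) (F_mat k) i j =
     (if i \<le> k \<and> j \<le> k \<and> i = j \<and> i + 1 \<le> k then (of_nat i + 1) * (of_nat k - of_nat i) else 0)"
proof -
  have "(\<Sum>m\<le>k. E_mat k i m * F_mat k m j) = (if i + 1 \<le> k then E_mat k i (i+1) * F_mat k (i+1) j else 0)"
    by (rule sum_atMost_single) (auto simp: E_mat_def)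
  then show ?thesis
    by (auto simp: mmult_def E_mat_apply F_mat_def algebra_simps)
qed

lemma mmult_F_E_apply:
  "mmult k (F_mat k) (E_mat k) i j =
     (if i \<le> k \<and> j \<le> k \<and> i = j \<and> 1 \<le> i then of_nat i * (of_nat k + 1 - of_nat i) else 0)"
proof -
  have "(\<Sum>m\<le>k. F_mat k i m * E_mat k m j) = (if i - 1 \<le> k then F_mat k i (i-1) * E_mat k (i-1) j else 0)"
    by (rule sum_atMost_single) (auto simp: F_mat_def)
  then show ?thesis
    by (auto simp: mmult_def E_mat_apply F_mat_def)
qed

lemma mmult_H_left_apply:
  "mmult k (H_mat k) A i j = (if i \<le> k \<and> j \<le> k then of_int (int k - 2 * int i) * A i j else 0)"
proof -
  have "i \<le> k \<Longrightarrow> (\<Sum>m\<le>k. H_mat k i m * A m j) = H_mat k i i * A i j"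
    by (subst sum_atMost_single[of i]) (auto simp: H_mat_def)
  then show ?thesis
    by (auto simp: mmult_def H_mat_def)
qed

lemma mmult_H_right_apply:
  "mmult k A (H_mat k) i j = (if i \<le> k \<and> j \<le> k then A i j * of_int (int k - 2 * int j) else 0)"
proof -
  have "j \<le> k \<Longrightarrow> (\<Sum>m\<le>k. A i m * H_mat k m j) = A i j * H_mat k j j"
    by (subst sum_atMost_single[of j]) (auto simp: H_mat_def)
  then show ?thesis
    by (auto simp: mmult_def H_mat_def)
qed

lemma commutator_E_F: "mmult k (E_mat k) (F_mat k) = mmult k (F_mat k) (E_mat k) + H_mat k"
proof (intro ext)
  fix i j
  show "mmult k (E_mat k) (F_mat k) i j = (mmult k (F_mat k) (E_mat k) + H_mat k) i j"
  proof (cases "i \<le> k \<and> j \<le> k \<and> i = j")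
    case True
    then consider "j = i" "i = 0" | "j = i" "1 \<le> i" "i + 1 \<le> k" | "j = i" "i = k" "1 \<le> i"
      by linarith
    then show ?thesis
      by cases (auto simp: mmult_E_F_apply mmult_F_E_apply H_mat_def algebra_simps)
  qed (auto simp: mmult_E_F_apply mmult_F_E_apply H_mat_def)
qed

lemma commutator_H_E: "mmult k (H_mat k) (E_mat k) = mmult k (E_mat k) (H_mat k) + mscale 2 (E_mat k)"
  by (auto simp: fun_eq_iff mmult_H_left_apply mmult_H_right_apply mscale_def E_mat_def algebra_simps)

lemma commutator_H_F: "mmult k (H_mat k) (F_mat k) = mmult k (F_mat k) (H_mat k) - mscale 2 (F_mat k)"
  by (auto simp: fun_eq_iff mmult_H_left_apply mmult_H_right_apply mscale_def F_mat_def algebra_simps)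

lemma casimir4_mat_eq: "casimir4_mat k = mscale (4 * casimir k) (mone k)"
proof (intro ext)
  fix i j
  show "casimir4_mat k i j = mscale (4 * casimir k) (mone k) i j"
  proof (cases "i \<le> k \<and> j \<le> k \<and> i = j")
    case True
    then show ?thesis
      by (cases "i = 0") (simp_all add: casimir4_mat_def casimir_def mmult_H_left_apply mmult_F_E_apply
          mscale_def H_mat_apply mone_def algebra_simps power2_eq_square)
  qed (auto simp: casimir4_mat_def mmult_H_left_apply mmult_F_E_apply mscale_def H_mat_apply mone_def)
qed

lemma mmult_casimir4_mat_right: "is_mat k Z \<Longrightarrow> mmult k Z (casimir4_mat k) = mscale (4 * casimir k) Z"
  by (simp add: casimir4_mat_eq mmult_mscale_right mmult_mone_right)

lemma mmult_casimir4_mat_left: "is_mat k Z \<Longrightarrow> mmult k (casimir4_mat k) Z = mscale (4 * casimir k) Z"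
  by (simp add: casimir4_mat_eq mmult_mscale_left mmult_mone_left)

section \<open>Identities in the enveloping algebra, checked by normalisation\<close>

text \<open>Words in \<open>E, F, H\<close> and one further letter \<open>Z\<close> standing for an arbitrary matrix, and integer
  linear combinations of them. The rewriting step applies the commutation relations so as to move
  \<open>F\<close> before \<open>H\<close> before \<open>E\<close>; the letter \<open>Z\<close> is never moved. An identity is certified by rewriting
  the difference of its two sides to the empty combination.\<close>

datatype gen = LE | LF | LH | LZ

type_synonym lc = "(int \<times> gen list) list"

fun gen_mat :: "nat \<Rightarrow> cmat \<Rightarrow> gen \<Rightarrow> cmat" where
  "gen_mat k Z LE = E_mat k"
| "gen_mat k Z LF = F_mat k"
| "gen_mat k Z LH = H_mat k"
| "gen_mat k Z LZ = Z"

fun eval_word :: "nat \<Rightarrow> cmat \<Rightarrow> gen list \<Rightarrow> cmat" where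
  "eval_word k Z [] = mone k"
| "eval_word k Z (x # w) = mmult k (gen_mat k Z x) (eval_word k Z w)"

definition eval_lc :: "nat \<Rightarrow> cmat \<Rightarrow> lc \<Rightarrow> cmat" where
  "eval_lc k Z p = sum_list (map (\<lambda>(c, w). mscale (of_int c) (eval_word k Z w)) p)"

lemma eval_lc_Nil [simp]: "eval_lc k Z [] = 0"
  by (simp add: eval_lc_def)

lemma eval_lc_Cons [simp]: "eval_lc k Z ((c, w) # p) = mscale (of_int c) (eval_word k Z w) + eval_lc k Z p"
  by (simp add: eval_lc_def)

lemma eval_lc_append [simp]: "eval_lc k Z (p @ q) = eval_lc k Z p + eval_lc k Z q"
  by (simp add: eval_lc_def)

lemma eval_lc_concat: "eval_lc k Z (concat ps) = sum_list (map (eval_lc k Z) ps)"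
  by (induction ps) auto

lemma mmult_sum_list_right: "mmult k A (sum_list xs) = sum_list (map (mmult k A) xs)"
  by (induction xs) (simp_all add: mmult_add_right)

lemma mmult_sum_list_left: "mmult k (sum_list xs) A = sum_list (map (\<lambda>x. mmult k x A) xs)"
  by (induction xs) (simp_all add: mmult_add_left)

lemma mscale_sum_list: "mscale a (sum_list xs) = sum_list (map (mscale a) xs)"
  by (induction xs) (simp_all add: mscale_add)

lemma is_mat_eval_word [simp]: "is_mat k (eval_word k Z w)"
  by (cases w) auto

lemma eval_word_append: "eval_word k Z (u @ w) = mmult k (eval_word k Z u) (eval_word k Z w)"
  by (induction u) (auto simp: mmult_mone_left mmult_assoc)

lemma eval_word_single [simp]:
  "eval_word k Z [LE] = E_mat k" "eval_word k Z [LF] = F_mat k" "eval_word k Z [LH] = H_mat k"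
  "is_mat k Z \<Longrightarrow> eval_word k Z [LZ] = Z"
  by (simp_all add: mmult_mone_right)

fun rewrite_head :: "gen \<Rightarrow> gen list \<Rightarrow> lc option" where
  "rewrite_head LE (LF # w) = Some [(1, LF # LE # w), (1, LH # w)]"
| "rewrite_head LE (LH # w) = Some [(1, LH # LE # w), (-2, LE # w)]"
| "rewrite_head LH (LF # w) = Some [(1, LF # LH # w), (-2, LF # w)]"
| "rewrite_head x w = None"

fun rewrite_step :: "gen list \<Rightarrow> lc option" where
  "rewrite_step [] = None"
| "rewrite_step (x # w) =
     (case rewrite_head x w of
        Some p \<Rightarrow> Some p
      | None \<Rightarrow> map_option (map (\<lambda>(c, u). (c, x # u))) (rewrite_step w))"

definition lc_scale :: "int \<Rightarrow> lc \<Rightarrow> lc" where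
  "lc_scale a p = map (\<lambda>(c, u). (a * c, u)) p"

fun normal_word :: "nat \<Rightarrow> gen list \<Rightarrow> lc" where
  "normal_word 0 w = [(1, w)]"
| "normal_word (Suc n) w =
     (case rewrite_step w of
        None \<Rightarrow> [(1, w)]
      | Some p \<Rightarrow> concat (map (\<lambda>(c, u). lc_scale c (normal_word n u)) p))"

definition normal_lc :: "nat \<Rightarrow> lc \<Rightarrow> lc" where
  "normal_lc n p = concat (map (\<lambda>(c, u). lc_scale c (normal_word n u)) p)"

fun lc_insert :: "int \<times> gen list \<Rightarrow> lc \<Rightarrow> lc" where
  "lc_insert (c, w) [] = [(c, w)]"
| "lc_insert (c, w) ((d, u) # p) = (if w = u then (c + d, u) # p else (d, u) # lc_insert (c, w) p)"

definition collect :: "lc \<Rightarrow> lc" where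
  "collect p = filter (\<lambda>x. fst x \<noteq> 0) (foldr lc_insert p [])"

lemma eval_lc_scale [simp]: "eval_lc k Z (lc_scale a p) = mscale (of_int a) (eval_lc k Z p)"
  unfolding eval_lc_def lc_scale_def mscale_sum_list map_map
  by (rule arg_cong[where f = sum_list], rule map_cong) (auto simp: mscale_mscale)

lemma rewrite_head_sound: "rewrite_head x w = Some p \<Longrightarrow> eval_lc k Z p = eval_word k Z (x # w)"
  by (induction x w rule: rewrite_head.induct)
    (auto simp: commutator_E_F commutator_H_E commutator_H_F mmult_assoc[symmetric] mmult_linear
      mmult_mone_left,
      auto simp: mscale_def fun_eq_iff mmult_mone_left)

lemma rewrite_step_sound: "rewrite_step w = Some p \<Longrightarrow> eval_lc k Z p = eval_word k Z w"
proof (induction w arbitrary: p)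
  case (Cons x w)
  show ?case
  proof (cases "rewrite_head x w")
    case None
    with Cons.prems obtain q where q: "rewrite_step w = Some q" "p = map (\<lambda>(c, u). (c, x # u)) q"
      by auto
    have "eval_lc k Z p = mmult k (gen_mat k Z x) (eval_lc k Z q)"
      unfolding q(2) eval_lc_def mmult_sum_list_right map_map
      by (rule arg_cong[where f = sum_list], rule map_cong) (auto simp: mmult_mscale_right)
    with Cons.IH[OF q(1)] show ?thesis
      by simp
  qed (use Cons.prems rewrite_head_sound in auto)
qed simp

lemma eval_lc_concat_scale:
  assumes "\<And>c u. (c, u) \<in> set p \<Longrightarrow> eval_lc k Z (f u) = eval_word k Z u"
  shows "eval_lc k Z (concat (map (\<lambda>(c, u). lc_scale c (f u)) p)) = eval_lc k Z p"
  using assms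
proof (induction p)
  case (Cons a p)
  obtain c u where a: "a = (c, u)"
    by (cases a)
  have "eval_lc k Z (f u) = eval_word k Z u"
    using Cons.prems a by auto
  moreover have "eval_lc k Z (concat (map (\<lambda>(c, u). lc_scale c (f u)) p)) = eval_lc k Z p"
    using Cons by auto
  ultimately show ?case
    by (simp add: a)
qed simp

lemma normal_word_sound: "eval_lc k Z (normal_word n w) = eval_word k Z w"
proof (induction n arbitrary: w)
  case (Suc n)
  show ?case
  proof (cases "rewrite_step w")
    case (Some p)
    then have "eval_lc k Z (normal_word (Suc n) w) = eval_lc k Z p"
      by (simp add: eval_lc_concat_scale Suc.IH)
    also have "\<dots> = eval_word k Z w"
      using Some by (rule rewrite_step_sound)
    finally show ?thesis .
  qed simp
qed simp

lemma normal_lc_sound: "eval_lc k Z (normal_lc n p) = eval_lc k Z p"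
  unfolding normal_lc_def by (rule eval_lc_concat_scale) (rule normal_word_sound)

lemma eval_lc_insert: "eval_lc k Z (lc_insert (c, w) p) = mscale (of_int c) (eval_word k Z w) + eval_lc k Z p"
proof (induction p)
  case (Cons a p)
  then show ?case
    by (cases a) (auto simp: mscale_add_left add_ac)
qed simp

lemma eval_lc_collect: "eval_lc k Z (collect p) = eval_lc k Z p"
proof -
  have "eval_lc k Z (filter (\<lambda>x. fst x \<noteq> 0) q) = eval_lc k Z q" for q
    by (induction q) auto
  moreover have "eval_lc k Z (foldr lc_insert p []) = eval_lc k Z p"
    by (induction p) (auto simp: eval_lc_insert)
  ultimately show ?thesis
    by (simp add: collect_def)
qed

lemma eval_lc_eqI:
  assumes "collect (normal_lc n (P @ lc_scale (-1) Q)) = []"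
  shows "eval_lc k Z P = eval_lc k Z Q"
proof -
  have "eval_lc k Z P + mscale (-1) (eval_lc k Z Q) = 0"
    using arg_cong[OF assms, of "eval_lc k Z"] by (simp add: eval_lc_collect normal_lc_sound)
  then show ?thesis
    by simp
qed

definition lc_lmult :: "gen list \<Rightarrow> lc \<Rightarrow> lc" where
  "lc_lmult w p = map (\<lambda>(c, u). (c, w @ u)) p"

definition lc_rmult :: "lc \<Rightarrow> gen list \<Rightarrow> lc" where
  "lc_rmult p w = map (\<lambda>(c, u). (c, u @ w)) p"

definition lc_mult :: "lc \<Rightarrow> lc \<Rightarrow> lc" where
  "lc_mult p q = concat (map (\<lambda>(c, u). lc_scale c (lc_lmult u q)) p)"

lemma eval_lc_lmult [simp]: "eval_lc k Z (lc_lmult w p) = mmult k (eval_word k Z w) (eval_lc k Z p)"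
  unfolding eval_lc_def lc_lmult_def mmult_sum_list_right map_map
  by (rule arg_cong[where f = sum_list], rule map_cong) (auto simp: mmult_mscale_right eval_word_append)

lemma eval_lc_rmult [simp]: "eval_lc k Z (lc_rmult p w) = mmult k (eval_lc k Z p) (eval_word k Z w)"
  unfolding eval_lc_def lc_rmult_def mmult_sum_list_left map_map
  by (rule arg_cong[where f = sum_list], rule map_cong) (auto simp: mmult_mscale_left eval_word_append)

lemma eval_lc_mult [simp]: "eval_lc k Z (lc_mult p q) = mmult k (eval_lc k Z p) (eval_lc k Z q)"
  by (induction p) (auto simp: lc_mult_def eval_lc_concat mmult_add_left mmult_mscale_left)

text \<open>Four times the bridge operator \<open>Z \<mapsto> \<Sum>\<^sub>a x\<^sub>a Z x\<^sub>a\<close>, written in terms of \<open>E, F, H\<close>.\<close>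

definition bridge_op4 :: "nat \<Rightarrow> cmat \<Rightarrow> cmat" where
  "bridge_op4 k W =
     mscale 2 (mmult k (E_mat k) (mmult k W (F_mat k))) + mscale 2 (mmult k (F_mat k) (mmult k W (E_mat k)))
     + mmult k (H_mat k) (mmult k W (H_mat k))"

definition lc_bridge_op4 :: "lc \<Rightarrow> lc" where
  "lc_bridge_op4 p =
     lc_scale 2 (lc_lmult [LE] (lc_rmult p [LF])) @ lc_scale 2 (lc_lmult [LF] (lc_rmult p [LE]))
     @ lc_lmult [LH] (lc_rmult p [LH])"

definition lc_Z :: lc where
  "lc_Z = [(1, [LZ])]"

definition lc_casimir4 :: lc where
  "lc_casimir4 = [(4, [LF, LE]), (2, [LH]), (1, [LH, LH])]"

lemma eval_lc_bridge_op4 [simp]: "eval_lc k Z (lc_bridge_op4 p) = bridge_op4 k (eval_lc k Z p)"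
  by (simp add: lc_bridge_op4_def bridge_op4_def add.assoc mmult_mone_right)

lemma eval_lc_Z [simp]: "is_mat k Z \<Longrightarrow> eval_lc k Z lc_Z = Z"
  by (simp add: lc_Z_def mmult_mone_right)

lemma eval_lc_casimir4 [simp]: "eval_lc k Z lc_casimir4 = casimir4_mat k"
  by (simp add: lc_casimir4_def casimir4_mat_def mmult_mone_right add.assoc)

lemma is_mat_bridge_op4 [simp]: "is_mat k (bridge_op4 k A)"
  by (simp add: bridge_op4_def)

lemma bridge_op4_commute:
  assumes "is_mat k Z" and "A \<in> {E_mat k, F_mat k, H_mat k}"
  shows "bridge_op4 k (mmult k Z A) - bridge_op4 k (mmult k A Z)
    = mmult k (bridge_op4 k Z) A - mmult k A (bridge_op4 k Z)"
proof -
  define P where "P g = lc_bridge_op4 (lc_rmult lc_Z [g]) @ lc_scale (-1) (lc_bridge_op4 (lc_lmult [g] lc_Z))" for g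
  define Q where "Q g = lc_rmult (lc_bridge_op4 lc_Z) [g] @ lc_scale (-1) (lc_lmult [g] (lc_bridge_op4 lc_Z))" for g
  have "list_all (\<lambda>g. collect (normal_lc 40 (P g @ lc_scale (-1) (Q g))) = []) [LE, LF, LH]"
    unfolding P_def Q_def by code_simp
  then have "eval_lc k Z (P g) = eval_lc k Z (Q g)" if "g \<in> {LE, LF, LH}" for g
    using that by (auto intro: eval_lc_eqI[of 40])
  from this[of LE] this[of LF] this[of LH] assms show ?thesis
    by (auto simp: P_def Q_def mmult_mone_right)
qed

lemma bridge_op4_shift_identity:
  assumes "is_mat k Z" and "A \<in> {E_mat k, F_mat k, H_mat k}"
  shows "bridge_op4 k (bridge_op4 k (mmult k Z A)) + mscale (-2) (bridge_op4 k (mmult k (bridge_op4 k Z) A))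
      + mmult k (bridge_op4 k (bridge_op4 k Z)) A
    = mscale 4 (mmult k (casimir4_mat k) (mmult k Z A)) + mscale 4 (mmult k (mmult k A Z) (casimir4_mat k))
      + mscale (-4) (bridge_op4 k (mmult k A Z)) + mscale (-4) (mmult k (bridge_op4 k Z) A)"
proof -
  define P where "P g = lc_bridge_op4 (lc_bridge_op4 (lc_rmult lc_Z [g]))
    @ lc_scale (-2) (lc_bridge_op4 (lc_rmult (lc_bridge_op4 lc_Z) [g])) @ lc_rmult (lc_bridge_op4 (lc_bridge_op4 lc_Z)) [g]"
    for g
  define Q where "Q g = lc_scale 4 (lc_mult lc_casimir4 (lc_rmult lc_Z [g])) @ lc_scale 4 (lc_mult (lc_lmult [g] lc_Z) lc_casimir4)
    @ lc_scale (-4) (lc_bridge_op4 (lc_lmult [g] lc_Z)) @ lc_scale (-4) (lc_rmult (lc_bridge_op4 lc_Z) [g])"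
    for g
  have "list_all (\<lambda>g. collect (normal_lc 40 (P g @ lc_scale (-1) (Q g))) = []) [LE, LF, LH]"
    unfolding P_def Q_def by code_simp
  then have "eval_lc k Z (P g) = eval_lc k Z (Q g)" if "g \<in> {LE, LF, LH}" for g
    using that by (auto intro: eval_lc_eqI[of 40])
  from this[of LE] this[of LF] this[of LH] assms show ?thesis
    by (auto simp: P_def Q_def add.assoc mmult_mone_right)
qed

text \<open>The left-hand sides below are \<open>4 \<cdot> transfer k T Z\<close> (see \<open>transfer_eq\<close>) for \<open>T\<close> the
  identity, \<open>4 \<Omega>\<close> and \<open>16 \<Omega>\<^sup>2\<close>.\<close>

lemma transfer4_id_identity:
  assumes "is_mat k Z"
  shows "mscale 2 (mmult k (mmult k Z (E_mat k)) (F_mat k)) + mscale 2 (mmult k (mmult k Z (F_mat k)) (E_mat k))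
      + mmult k (mmult k Z (H_mat k)) (H_mat k)
    = mmult k Z (casimir4_mat k)"
proof -
  have "eval_lc k Z (lc_scale 2 (lc_rmult (lc_rmult lc_Z [LE]) [LF]) @ lc_scale 2 (lc_rmult (lc_rmult lc_Z [LF]) [LE])
        @ lc_rmult (lc_rmult lc_Z [LH]) [LH])
      = eval_lc k Z (lc_mult lc_Z lc_casimir4)"
    by (rule eval_lc_eqI[of 40]) code_simp
  then show ?thesis
    using assms by (simp add: add.assoc mmult_mone_right)
qed

lemma transfer4_bridge_op4_identity:
  assumes "is_mat k Z"
  shows "mscale 2 (mmult k (bridge_op4 k (mmult k Z (E_mat k))) (F_mat k))
      + mscale 2 (mmult k (bridge_op4 k (mmult k Z (F_mat k))) (E_mat k))
      + mmult k (bridge_op4 k (mmult k Z (H_mat k))) (H_mat k)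
    = mmult k (bridge_op4 k Z) (casimir4_mat k) + mscale (-4) (bridge_op4 k Z)"
proof -
  have "eval_lc k Z (lc_scale 2 (lc_rmult (lc_bridge_op4 (lc_rmult lc_Z [LE])) [LF])
        @ lc_scale 2 (lc_rmult (lc_bridge_op4 (lc_rmult lc_Z [LF])) [LE])
        @ lc_rmult (lc_bridge_op4 (lc_rmult lc_Z [LH])) [LH])
      = eval_lc k Z (lc_mult (lc_bridge_op4 lc_Z) lc_casimir4 @ lc_scale (-4) (lc_bridge_op4 lc_Z))"
    by (rule eval_lc_eqI[of 40]) code_simp
  then show ?thesis
    using assms by (simp add: add.assoc mmult_mone_right)
qed

lemma transfer4_bridge_op4_sq_identity:
  assumes "is_mat k Z"
  shows "mscale 2 (mmult k (bridge_op4 k (bridge_op4 k (mmult k Z (E_mat k)))) (F_mat k))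
      + mscale 2 (mmult k (bridge_op4 k (bridge_op4 k (mmult k Z (F_mat k)))) (E_mat k))
      + mmult k (bridge_op4 k (bridge_op4 k (mmult k Z (H_mat k)))) (H_mat k)
    = mmult k (bridge_op4 k (bridge_op4 k Z)) (casimir4_mat k) + mscale (-12) (bridge_op4 k (bridge_op4 k Z))
      + mscale 16 (bridge_op4 k Z) + mscale 4 (mmult k (mmult k (casimir4_mat k) Z) (casimir4_mat k))"
proof -
  have "eval_lc k Z (lc_scale 2 (lc_rmult (lc_bridge_op4 (lc_bridge_op4 (lc_rmult lc_Z [LE]))) [LF])
        @ lc_scale 2 (lc_rmult (lc_bridge_op4 (lc_bridge_op4 (lc_rmult lc_Z [LF]))) [LE])
        @ lc_rmult (lc_bridge_op4 (lc_bridge_op4 (lc_rmult lc_Z [LH]))) [LH])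
      = eval_lc k Z (lc_mult (lc_bridge_op4 (lc_bridge_op4 lc_Z)) lc_casimir4
        @ lc_scale (-12) (lc_bridge_op4 (lc_bridge_op4 lc_Z)) @ lc_scale 16 (lc_bridge_op4 lc_Z)
        @ lc_scale 4 (lc_mult (lc_mult lc_casimir4 lc_Z) lc_casimir4))"
    by (rule eval_lc_eqI[of 40]) code_simp
  then show ?thesis
    using assms by (simp add: add.assoc mmult_mone_right)
qed

section \<open>The bridge operator and the transfer operator\<close>

text \<open>\<open>bridge_op k\<close> is the effect on \<open>End V\<^sub>k\<close> of a bridge, \<open>\<Omega> Z = \<Sum>\<^sub>a x\<^sub>a Z x\<^sub>a\<close>; \<open>transfer k T\<close>
  is the effect of a bridge on a linear map \<open>T\<close> sitting on the other side of a closed diagram.\<close>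

definition bridge_op :: "nat \<Rightarrow> cmat \<Rightarrow> cmat" where
  "bridge_op k Z = (\<Sum>a\<in>{0,1,2::nat}. mmult k (x_mat k a) (mmult k Z (x_mat k a)))"

definition transfer :: "nat \<Rightarrow> (cmat \<Rightarrow> cmat) \<Rightarrow> cmat \<Rightarrow> cmat" where
  "transfer k T Z = (\<Sum>a\<in>{0,1,2::nat}. mmult k (T (mmult k Z (x_mat k a))) (x_mat k a))"

definition mlinear :: "(cmat \<Rightarrow> cmat) \<Rightarrow> bool" where
  "mlinear T \<longleftrightarrow> (\<forall>A B. T (A + B) = T A + T B) \<and> (\<forall>a A. T (mscale a A) = mscale a (T A))"

lemma sum_012: "(\<Sum>a\<in>{0,1,2::nat}. f a) = f 0 + f 1 + f 2"
  by (simp add: add.assoc)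

lemma bridge_op_eq: "bridge_op k Z = mscale (1/4) (bridge_op4 k Z)"
  unfolding bridge_op_def sum_012 x_mat_0 x_mat_1 x_mat_2 bridge_op4_def
  by (simp add: mmult_linear, simp add: fun_eq_iff mscale_def algebra_simps)

lemma bridge_op4_add: "bridge_op4 k (A + B) = bridge_op4 k A + bridge_op4 k B"
  by (simp add: bridge_op4_def mmult_linear mscale_add algebra_simps)

lemma bridge_op4_diff: "bridge_op4 k (A - B) = bridge_op4 k A - bridge_op4 k B"
  by (simp add: bridge_op4_def mmult_linear mscale_diff algebra_simps)

lemma bridge_op4_mscale: "bridge_op4 k (mscale a A) = mscale a (bridge_op4 k A)"
  by (simp add: bridge_op4_def mmult_linear mscale_add mscale_mscale mult.commute)

lemma bridge_op_add: "bridge_op k (A + B) = bridge_op k A + bridge_op k B"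
  by (simp add: bridge_op_eq bridge_op4_add mscale_add)

lemma bridge_op_diff: "bridge_op k (A - B) = bridge_op k A - bridge_op k B"
  by (simp add: bridge_op_eq bridge_op4_diff mscale_diff)

lemma bridge_op_mscale: "bridge_op k (mscale a A) = mscale a (bridge_op k A)"
  by (simp add: bridge_op_eq bridge_op4_mscale mscale_mscale mult.commute)

lemma bridge_op_zero [simp]: "bridge_op k 0 = 0"
  by (simp add: bridge_op_def)

lemma is_mat_bridge_op [simp]: "is_mat k (bridge_op k A)"
  by (simp add: bridge_op_eq)

lemma bridge_op_mone: "bridge_op k (mone k) = mscale (casimir k) (mone k)"
proof -
  have "bridge_op4 k (mone k) = casimir4_mat k"
    by (simp add: bridge_op4_def casimir4_mat_def mmult_mone_left mmult_mone_right commutator_E_F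
        mmult_linear mscale_add, simp add: fun_eq_iff mscale_def)
  then show ?thesis
    by (simp add: bridge_op_eq casimir4_mat_eq mscale_mscale)
qed

lemma mlinear_id: "mlinear (\<lambda>Z. Z)"
  by (simp add: mlinear_def)

lemma mlinear_bridge_op: "mlinear (bridge_op k)"
  by (simp add: mlinear_def bridge_op_add bridge_op_mscale)

lemma mlinear_bridge_op_sq: "mlinear (\<lambda>Z. bridge_op k (bridge_op k Z))"
  by (simp add: mlinear_def bridge_op_add bridge_op_mscale)

lemma mlinear_diff: "mlinear T \<Longrightarrow> T (A - B) = T A - T B"
  unfolding mlinear_def by (metis add_diff_cancel diff_add_cancel)

lemma transfer_eq:
  assumes "mlinear T"
  shows "transfer k T Z = mscale (1/4)
    (mscale 2 (mmult k (T (mmult k Z (E_mat k))) (F_mat k)) + mscale 2 (mmult k (T (mmult k Z (F_mat k))) (E_mat k))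
     + mmult k (T (mmult k Z (H_mat k))) (H_mat k))"
proof -
  have "T (A + B) = T A + T B" "T (mscale a A) = mscale a (T A)" "T (A - B) = T A - T B" for A B a
    using assms mlinear_diff by (auto simp: mlinear_def)
  then show ?thesis
    unfolding transfer_def sum_012 x_mat_0 x_mat_1 x_mat_2
    by (simp add: mmult_linear, simp add: fun_eq_iff mscale_def algebra_simps)
qed

lemmas bridge_op_simps =
  bridge_op_eq bridge_op4_mscale bridge_op4_add bridge_op4_diff mscale_mscale mmult_linear mscale_add mscale_diff

text \<open>The two identities behind the spectral argument: \<open>\<Omega>\<close> commutes with the adjoint action, and a
  second-order relation between \<open>\<Omega>\<close>, left and right multiplication by an element of \<open>sl\<^sub>2\<close>.\<close>

lemma bridge_op_commute:
  assumes "is_mat k Z" and "A \<in> {E_mat k, F_mat k, H_mat k}"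
  shows "bridge_op k (mmult k Z A) - bridge_op k (mmult k A Z) = mmult k (bridge_op k Z) A - mmult k A (bridge_op k Z)"
proof -
  have pointwise: "bridge_op4 k (mmult k Z A) i j
      = bridge_op4 k (mmult k A Z) i j + mmult k (bridge_op4 k Z) A i j - mmult k A (bridge_op4 k Z) i j" for i j
    using fun_cong[OF fun_cong[OF bridge_op4_commute[OF assms]]] by (simp add: algebra_simps)
  show ?thesis
    by (simp add: bridge_op_simps, simp add: fun_eq_iff mscale_def pointwise algebra_simps)
qed

lemma bridge_op_shift_identity:
  assumes "is_mat k Z" and "A \<in> {E_mat k, F_mat k, H_mat k}"
  shows "bridge_op k (bridge_op k (mmult k Z A)) - mscale 2 (bridge_op k (mmult k (bridge_op k Z) A))
      + mmult k (bridge_op k (bridge_op k Z)) A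
    = mscale (casimir k) (mmult k Z A + mmult k A Z) - bridge_op k (mmult k A Z) - mmult k (bridge_op k Z) A"
proof -
  have "is_mat k A"
    using assms(2) by auto
  then have "bridge_op4 k (bridge_op4 k (mmult k Z A)) + mscale (-2) (bridge_op4 k (mmult k (bridge_op4 k Z) A))
      + mmult k (bridge_op4 k (bridge_op4 k Z)) A
    = mscale (16 * casimir k) (mmult k Z A) + mscale (16 * casimir k) (mmult k A Z)
      + mscale (-4) (bridge_op4 k (mmult k A Z)) + mscale (-4) (mmult k (bridge_op4 k Z) A)"
    using bridge_op4_shift_identity[OF assms]
    by (simp add: mmult_casimir4_mat_left mmult_casimir4_mat_right assms mscale_mscale)
  from fun_cong[OF fun_cong[OF this]]
  have pointwise: "bridge_op4 k (bridge_op4 k (mmult k Z A)) i j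
      = 2 * bridge_op4 k (mmult k (bridge_op4 k Z) A) i j - mmult k (bridge_op4 k (bridge_op4 k Z)) A i j
        + 16 * casimir k * mmult k Z A i j + 16 * casimir k * mmult k A Z i j
        - 4 * bridge_op4 k (mmult k A Z) i j - 4 * mmult k (bridge_op4 k Z) A i j" for i j
    by (simp add: mscale_def algebra_simps)
  show ?thesis
    by (simp add: bridge_op_simps, simp add: fun_eq_iff mscale_def pointwise algebra_simps)
qed

lemma transfer_id:
  assumes "is_mat k Z"
  shows "transfer k (\<lambda>Z. Z) Z = mscale (casimir k) Z"
  using transfer4_id_identity[OF assms]
  by (simp add: transfer_eq[OF mlinear_id] mmult_casimir4_mat_right assms mscale_mscale)

lemma transfer_bridge_op:
  assumes "is_mat k Z"
  shows "transfer k (bridge_op k) Z = mscale (casimir k - 1) (bridge_op k Z)"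
proof -
  from fun_cong[OF fun_cong[OF transfer4_bridge_op4_identity[OF assms]]]
  have pointwise: "mmult k (bridge_op4 k (mmult k Z (H_mat k))) (H_mat k) i j
      = - 2 * mmult k (bridge_op4 k (mmult k Z (E_mat k))) (F_mat k) i j
        - 2 * mmult k (bridge_op4 k (mmult k Z (F_mat k))) (E_mat k) i j
        + 4 * casimir k * bridge_op4 k Z i j - 4 * bridge_op4 k Z i j" for i j
    by (simp add: mmult_casimir4_mat_right mscale_def algebra_simps)
  show ?thesis
    by (simp add: transfer_eq[OF mlinear_bridge_op] bridge_op_simps,
        simp add: fun_eq_iff mscale_def pointwise algebra_simps)
qed

lemma transfer_bridge_op_sq:
  assumes "is_mat k Z"
  shows "transfer k (\<lambda>Z. bridge_op k (bridge_op k Z)) Z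
    = mscale (casimir k - 3) (bridge_op k (bridge_op k Z)) + bridge_op k Z + mscale (casimir k ^ 2) Z"
proof -
  have "mscale 2 (mmult k (bridge_op4 k (bridge_op4 k (mmult k Z (E_mat k)))) (F_mat k))
      + mscale 2 (mmult k (bridge_op4 k (bridge_op4 k (mmult k Z (F_mat k)))) (E_mat k))
      + mmult k (bridge_op4 k (bridge_op4 k (mmult k Z (H_mat k)))) (H_mat k)
    = mscale (4 * casimir k) (bridge_op4 k (bridge_op4 k Z)) + mscale (-12) (bridge_op4 k (bridge_op4 k Z))
      + mscale 16 (bridge_op4 k Z) + mscale 4 (mscale (4 * casimir k) (mscale (4 * casimir k) Z))"
    using transfer4_bridge_op4_sq_identity[OF assms]
    by (simp add: mmult_casimir4_mat_right mmult_casimir4_mat_left assms mmult_mscale_left)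
  from fun_cong[OF fun_cong[OF this]]
  have pointwise: "mmult k (bridge_op4 k (bridge_op4 k (mmult k Z (H_mat k)))) (H_mat k) i j
      = - 2 * mmult k (bridge_op4 k (bridge_op4 k (mmult k Z (E_mat k)))) (F_mat k) i j
        - 2 * mmult k (bridge_op4 k (bridge_op4 k (mmult k Z (F_mat k)))) (E_mat k) i j
        + 4 * casimir k * bridge_op4 k (bridge_op4 k Z) i j - 12 * bridge_op4 k (bridge_op4 k Z) i j
        + 16 * bridge_op4 k Z i j + 64 * casimir k ^ 2 * Z i j" for i j
    by (simp add: mscale_def power2_eq_square algebra_simps)
  show ?thesis
    by (subst transfer_eq[OF mlinear_bridge_op_sq], simp add: bridge_op_simps,
        simp add: fun_eq_iff mscale_def pointwise algebra_simps power2_eq_square, simp add: field_simps)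
qed

section \<open>Polynomials in the bridge operator\<close>

definition poly_op :: "nat \<Rightarrow> complex poly \<Rightarrow> cmat \<Rightarrow> cmat" where
  "poly_op k p = fold_coeffs (\<lambda>a f Z. mscale a Z + bridge_op k (f Z)) p (\<lambda>Z. 0)"

lemma poly_op_0 [simp]: "poly_op k 0 Z = 0"
  by (simp add: poly_op_def)

lemma poly_op_pCons: "poly_op k (pCons a p) Z = mscale a Z + bridge_op k (poly_op k p Z)"
proof (cases "p = 0 \<and> a = 0")
  case False
  then have "fold_coeffs (\<lambda>a f Z. mscale a Z + bridge_op k (f Z)) (pCons a p) =
      (\<lambda>a f Z. mscale a Z + bridge_op k (f Z)) a \<circ> fold_coeffs (\<lambda>a f Z. mscale a Z + bridge_op k (f Z)) p"
    by (cases "p = 0") auto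
  then show ?thesis
    by (simp add: poly_op_def)
qed simp

lemma poly_op_one [simp]: "poly_op k 1 Z = Z"
  by (simp add: one_pCons poly_op_pCons)

lemma poly_op_linear_factor: "poly_op k [:b, 1:] Z = bridge_op k Z + mscale b Z"
  by (simp add: poly_op_pCons)

lemma poly_op_monom: "poly_op k (monom 1 m) Z = (bridge_op k ^^ m) Z"
  by (induction m) (simp_all add: monom_Suc poly_op_pCons)

lemma is_mat_poly_op [simp]: "is_mat k Z \<Longrightarrow> is_mat k (poly_op k p Z)"
  by (induction p) (simp_all add: poly_op_pCons)

lemma poly_op_add_right: "poly_op k p (A + B) = poly_op k p A + poly_op k p B"
  by (induction p) (simp_all add: poly_op_pCons mscale_add bridge_op_add algebra_simps)

lemma poly_op_mscale_right: "poly_op k p (mscale c A) = mscale c (poly_op k p A)"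
  by (induction p) (simp_all add: poly_op_pCons mscale_add mscale_mscale bridge_op_mscale mult.commute)

lemma poly_op_zero_right [simp]: "poly_op k p 0 = 0"
  by (induction p) (simp_all add: poly_op_pCons)

lemma poly_op_diff_right: "poly_op k p (A - B) = poly_op k p A - poly_op k p B"
  by (metis add_diff_cancel diff_add_cancel poly_op_add_right)

lemma poly_op_sum_right: "poly_op k p (\<Sum>x\<in>S. f x) = (\<Sum>x\<in>S. poly_op k p (f x))"
  by (induction S rule: infinite_finite_induct) (simp_all add: poly_op_add_right)

lemma poly_op_add: "poly_op k (p + q) Z = poly_op k p Z + poly_op k q Z"
proof (induction p arbitrary: q)
  case (pCons a p)
  then show ?case
    by (cases q) (simp add: poly_op_pCons mscale_add_left bridge_op_add add_ac)
qed simp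

lemma poly_op_smult: "poly_op k (smult a p) Z = mscale a (poly_op k p Z)"
  by (induction p) (simp_all add: poly_op_pCons mscale_add mscale_mscale bridge_op_mscale)

lemma poly_op_diff: "poly_op k (p - q) Z = poly_op k p Z - poly_op k q Z"
  by (metis add_diff_cancel diff_add_cancel poly_op_add)

lemma poly_op_sum: "poly_op k (\<Sum>x\<in>S. f x) Z = (\<Sum>x\<in>S. poly_op k (f x) Z)"
  by (induction S rule: infinite_finite_induct) (simp_all add: poly_op_add)

lemma poly_op_mult: "poly_op k (p * q) Z = poly_op k p (poly_op k q Z)"
proof (induction p)
  case (pCons a p)
  have "pCons a p * q = smult a q + pCons 0 (p * q)"
    by (simp add: mult_pCons_left)
  with pCons.IH show ?case
    by (simp add: poly_op_add poly_op_smult poly_op_pCons)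
qed simp

lemma poly_op_dvd_eq_0:
  assumes "p dvd q" and "poly_op k p Z = 0"
  shows "poly_op k q Z = 0"
proof -
  obtain r where "q = r * p"
    using assms(1) by (metis dvdE mult.commute)
  with assms(2) show ?thesis
    by (simp add: poly_op_mult)
qed

lemma prod_linear_factors_dvd:
  fixes f :: "'a \<Rightarrow> 'b :: idom"
  assumes "finite L" and "inj_on f L" and "\<forall>l\<in>L. poly g (f l) = 0"
  shows "(\<Prod>l\<in>L. [:- f l, 1:]) dvd g"
  using assms
proof (induction L arbitrary: g rule: finite_induct)
  case (insert x L)
  then have "(\<Prod>l\<in>L. [:- f l, 1:]) dvd g"
    by (simp add: inj_on_insert)
  then obtain h where h: "g = (\<Prod>l\<in>L. [:- f l, 1:]) * h"
    by (elim dvdE)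
  have "poly (\<Prod>l\<in>L. [:- f l, 1:]) (f x) \<noteq> 0"
    using insert by (auto simp: poly_prod inj_on_insert)
  with h insert.prems have "[:- f x, 1:] dvd h"
    by (simp add: poly_eq_0_iff_dvd)
  then have "[:- f x, 1:] * (\<Prod>l\<in>L. [:- f l, 1:]) dvd (\<Prod>l\<in>L. [:- f l, 1:]) * h"
    by (metis mult.commute mult_dvd_mono dvd_refl)
  then show ?case
    using insert.hyps h by simp
qed simp

definition lagrange :: "('a \<Rightarrow> complex) \<Rightarrow> 'a set \<Rightarrow> 'a \<Rightarrow> complex poly" where
  "lagrange f L l = smult (1 / (\<Prod>l'\<in>L - {l}. f l - f l')) (\<Prod>l'\<in>L - {l}. [:- f l', 1:])"

lemma poly_lagrange:
  assumes "finite L" and "inj_on f L" and "l \<in> L" and "l' \<in> L"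
  shows "poly (lagrange f L l) (f l') = (if l' = l then 1 else 0)"
proof (cases "l' = l")
  case True
  have "(\<Prod>l''\<in>L - {l}. f l - f l'') \<noteq> 0"
    using assms by (auto simp: inj_on_def)
  with True show ?thesis
    by (simp add: lagrange_def poly_prod)
next
  case False
  then have "(\<Prod>l''\<in>L - {l}. poly [:- f l'', 1:] (f l')) = 0"
    using assms by (intro prod_zero) auto
  with False show ?thesis
    by (simp add: lagrange_def poly_prod)
qed

lemma poly_op_spectral:
  assumes "finite L" and "inj_on f L" and "poly_op k (\<Prod>l\<in>L. [:- f l, 1:]) Z = 0"
  shows "poly_op k g Z = (\<Sum>l\<in>L. mscale (poly g (f l)) (poly_op k (lagrange f L l) Z))"
proof -
  let ?h = "g - (\<Sum>l\<in>L. smult (poly g (f l)) (lagrange f L l))"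
  have "poly ?h (f l') = 0" if l': "l' \<in> L" for l'
  proof -
    have "(\<Sum>l\<in>L. poly g (f l) * poly (lagrange f L l) (f l')) = (\<Sum>l\<in>L. if l = l' then poly g (f l') else 0)"
      by (rule sum.cong) (use assms l' in \<open>auto simp: poly_lagrange\<close>)
    also have "\<dots> = poly g (f l')"
      using l' assms(1) by simp
    finally show ?thesis
      by (simp add: poly_sum)
  qed
  then have "(\<Prod>l\<in>L. [:- f l, 1:]) dvd ?h"
    using assms by (intro prod_linear_factors_dvd) auto
  then have "poly_op k ?h Z = 0"
    using assms(3) by (rule poly_op_dvd_eq_0)
  then show ?thesis
    by (simp add: poly_op_diff poly_op_sum poly_op_smult)
qed

lemma poly_op_lagrange_eigen:
  assumes "finite L" and "inj_on f L" and "poly_op k (\<Prod>l\<in>L. [:- f l, 1:]) Z = 0" and "l \<in> L"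
  shows "bridge_op k (poly_op k (lagrange f L l) Z) = mscale (f l) (poly_op k (lagrange f L l) Z)"
proof -
  have "[:- f l, 1:] * lagrange f L l = smult (1 / (\<Prod>l'\<in>L - {l}. f l - f l')) (\<Prod>l\<in>L. [:- f l, 1:])"
    using assms by (simp add: lagrange_def mult_smult_right prod.remove)
  then have "poly_op k ([:- f l, 1:] * lagrange f L l) Z = 0"
    using assms(3) by (simp add: poly_op_smult)
  then show ?thesis
    by (simp only: poly_op_mult poly_op_linear_factor) (simp add: fun_eq_iff mscale_def add_eq_0_iff)
qed

section \<open>Eigenvalues of the bridge operator\<close>

text \<open>\<open>eigval k l\<close> is the eigenvalue of \<open>\<Omega>\<close> on the copy of \<open>V\<^sub>2\<^sub>l\<close> inside \<open>End V\<^sub>k \<cong> V\<^sub>k \<otimes> V\<^sub>k\<close>.\<close>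

definition eigval :: "nat \<Rightarrow> nat \<Rightarrow> complex" where
  "eigval k l = casimir k - of_nat (l * (l + 1)) / 2"

definition eig_prod :: "nat \<Rightarrow> nat \<Rightarrow> complex poly" where
  "eig_prod k j = (\<Prod>l\<le>j. [:- eigval k l, 1:])"

text \<open>For \<open>l = 0\<close> the truncated subtraction makes \<open>shift_set 0 = {0, 1}\<close>, as it should be.\<close>

definition shift_set :: "nat \<Rightarrow> nat set" where
  "shift_set l = {l - 1, l, l + 1}"

definition shift_prod :: "nat \<Rightarrow> nat \<Rightarrow> complex poly" where
  "shift_prod k l = (\<Prod>l'\<in>shift_set l. [:- eigval k l', 1:])"

lemma inj_mult_self_add: "inj (\<lambda>n::nat. n * (n + c))"
proof -
  have "strict_mono (\<lambda>n::nat. n * (n + c))"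
    by (rule strict_monoI) (simp add: mult_strict_mono)
  then show ?thesis
    by (rule strict_mono_imp_inj_on)
qed

lemma inj_on_eigval: "inj_on (eigval k) L"
proof (rule inj_onI)
  fix l l'
  assume "eigval k l = eigval k l'"
  then have "l * (l + 1) = l' * (l' + 1)"
    by (simp add: eigval_def del: of_nat_mult of_nat_add)
  then show "l = l'"
    by (rule injD[OF inj_mult_self_add])
qed

lemma eigval_Suc: "eigval k (Suc l) = eigval k l - (of_nat l + 1)"
  by (simp add: eigval_def field_simps)

lemma eigval_0: "eigval k 0 = casimir k"
  by (simp add: eigval_def)

lemma eigval_diff_1: "l \<ge> 1 \<Longrightarrow> eigval k (l - 1) = eigval k l + of_nat l"
  by (cases l) (simp_all add: eigval_Suc)

lemma shift_prod_eq:
  assumes "l \<ge> 1"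
  shows "shift_prod k l
    = [:- (eigval k l + of_nat l), 1:] * ([:- eigval k l, 1:] * [:- (eigval k l - of_nat l - 1), 1:])"
proof -
  have "l - 1 \<notin> {l, l + 1}"
    using assms by auto
  then have "shift_prod k l = [:- eigval k (l - 1), 1:] * ([:- eigval k l, 1:] * [:- eigval k (l + 1), 1:])"
    unfolding shift_prod_def shift_set_def by (subst prod.insert) auto
  also have "eigval k (l - 1) = eigval k l + of_nat l"
    using assms by (rule eigval_diff_1)
  also have "eigval k (l + 1) = eigval k l - of_nat l - 1"
    using eigval_Suc[of k l] by simp
  finally show ?thesis .
qed

lemma shift_prod_dvd_prod:
  assumes "shift_set l \<subseteq> L" and "finite L"
  shows "shift_prod k l dvd (\<Prod>l'\<in>L. [:- eigval k l', 1:])"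
  unfolding shift_prod_def using assms by (rule prod_dvd_prod_subset[rotated])

lemma poly_op_mone_eig_prod_0: "poly_op k (eig_prod k 0) (mone k) = 0"
  by (simp add: eig_prod_def eigval_0 poly_op_linear_factor bridge_op_mone mscale_def fun_eq_iff)

text \<open>Right multiplication by \<open>A \<in> sl\<^sub>2\<close> moves an eigenvector of eigenvalue \<open>\<lambda>\<^sub>l\<close> into the sum of the
  eigenspaces of \<open>\<lambda>\<^sub>l\<^sub>-\<^sub>1, \<lambda>\<^sub>l, \<lambda>\<^sub>l\<^sub>+\<^sub>1\<close> (tensoring \<open>V\<^sub>2\<^sub>l\<close> with the adjoint representation \<open>V\<^sub>2\<close>).\<close>

lemma mmult_eigenvector_relations:
  assumes "is_mat k Z" and "bridge_op k Z = mscale \<mu> Z" and "A \<in> {E_mat k, F_mat k, H_mat k}"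
  defines "v \<equiv> mmult k Z A" and "w \<equiv> mmult k A Z"
  shows "bridge_op k v - bridge_op k w = mscale \<mu> v - mscale \<mu> w"
    and "bridge_op k (bridge_op k v) - mscale 2 (mscale \<mu> (bridge_op k v)) + mscale (\<mu> * \<mu>) v
      = mscale (casimir k) (v + w) - bridge_op k w - mscale \<mu> v"
  using bridge_op_commute[OF assms(1,3)] bridge_op_shift_identity[OF assms(1,3)] assms(2)
  by (simp_all add: v_def w_def mmult_mscale_left mmult_mscale_right bridge_op_mscale mscale_mscale)

lemma poly_op_shift_prod_0:
  assumes "is_mat k Z" and "bridge_op k Z = mscale (eigval k 0) Z" and "A \<in> {E_mat k, F_mat k, H_mat k}"
  shows "poly_op k (shift_prod k 0) (mmult k Z A) = 0"
proof -
  define v where "v = mmult k Z A"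
  define w where "w = mmult k A Z"
  define c where "c = casimir k"
  note rel = mmult_eigenvector_relations[OF assms, folded v_def w_def, unfolded eigval_0 c_def[symmetric]]
  have "shift_set 0 = {0, 1}"
    by (auto simp: shift_set_def)
  then have "shift_prod k 0 = [:- c, 1:] * [:- (c - 1), 1:]"
    by (simp add: shift_prod_def eigval_def c_def)
  then have "poly_op k (shift_prod k 0) v
      = bridge_op k (bridge_op k v) + mscale (1 - 2 * c) (bridge_op k v) + mscale (c * c - c) v"
    by (simp only: poly_op_mult poly_op_linear_factor, simp add: bridge_op_add bridge_op_mscale mscale_mscale,
        simp add: fun_eq_iff mscale_def algebra_simps)
  also have "\<dots> = 0"
  proof (intro ext)
    fix i j
    show "(bridge_op k (bridge_op k v) + mscale (1 - 2 * c) (bridge_op k v) + mscale (c * c - c) v) i j = 0 i j"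
      using fun_cong[OF fun_cong[OF rel(1)], of i j] fun_cong[OF fun_cong[OF rel(2)], of i j]
      by (simp add: mscale_def) algebra
  qed
  finally show ?thesis
    by (simp add: v_def)
qed

lemma poly_op_shift_prod_pos:
  assumes "is_mat k Z" and "bridge_op k Z = mscale (eigval k l) Z" and "A \<in> {E_mat k, F_mat k, H_mat k}"
    and "l \<ge> 1"
  shows "poly_op k (shift_prod k l) (mmult k Z A) = 0"
proof -
  define v where "v = mmult k Z A"
  define w where "w = mmult k A Z"
  define \<mu> where "\<mu> = eigval k l"
  define c where "c = casimir k"
  note rel = mmult_eigenvector_relations[OF assms(1-3), folded v_def w_def \<mu>_def, unfolded c_def[symmetric]]
  note rel\<Omega> = rel[THEN arg_cong[where f = "bridge_op k"], unfolded bridge_op_diff bridge_op_add bridge_op_mscale]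
  have "poly_op k (shift_prod k l) v = bridge_op k (bridge_op k (bridge_op k v))
        + mscale (- (\<mu> + of_nat l) - \<mu> - (\<mu> - of_nat l - 1)) (bridge_op k (bridge_op k v))
        + mscale ((\<mu> + of_nat l) * \<mu> + \<mu> * (\<mu> - of_nat l - 1) + (\<mu> + of_nat l) * (\<mu> - of_nat l - 1)) (bridge_op k v)
        + mscale (- ((\<mu> + of_nat l) * \<mu> * (\<mu> - of_nat l - 1))) v"
    unfolding shift_prod_eq[OF assms(4), of k, folded \<mu>_def]
    by (simp only: poly_op_mult poly_op_linear_factor, simp add: bridge_op_add bridge_op_mscale mscale_mscale,
        simp add: fun_eq_iff mscale_def algebra_simps)
  also have "\<dots> = 0"
  proof (intro ext)
    fix i j
    have E1: "bridge_op k v i j - bridge_op k w i j = \<mu> * v i j - \<mu> * w i j"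
      using fun_cong[OF fun_cong[OF rel(1)], of i j] by (simp add: mscale_def)
    have E2: "bridge_op k (bridge_op k v) i j - 2 * (\<mu> * bridge_op k v i j) + \<mu> * \<mu> * v i j
        = c * (v i j + w i j) - bridge_op k w i j - \<mu> * v i j"
      using fun_cong[OF fun_cong[OF rel(2)], of i j] by (simp add: mscale_def)
    have E3: "bridge_op k (bridge_op k v) i j - bridge_op k (bridge_op k w) i j
        = \<mu> * bridge_op k v i j - \<mu> * bridge_op k w i j"
      using fun_cong[OF fun_cong[OF rel\<Omega>(1)], of i j] by (simp add: mscale_def)
    have E4: "bridge_op k (bridge_op k (bridge_op k v)) i j - 2 * (\<mu> * bridge_op k (bridge_op k v) i j)
        + \<mu> * \<mu> * bridge_op k v i j
        = c * (bridge_op k v i j + bridge_op k w i j) - bridge_op k (bridge_op k w) i j - \<mu> * bridge_op k v i j"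
      using fun_cong[OF fun_cong[OF rel\<Omega>(2)], of i j] by (simp add: mscale_def)
    have gap: "2 * (c - \<mu>) = of_nat l * (of_nat l + 1)"
      by (simp add: \<mu>_def c_def eigval_def field_simps)
    show "(bridge_op k (bridge_op k (bridge_op k v))
        + mscale (- (\<mu> + of_nat l) - \<mu> - (\<mu> - of_nat l - 1)) (bridge_op k (bridge_op k v))
        + mscale ((\<mu> + of_nat l) * \<mu> + \<mu> * (\<mu> - of_nat l - 1) + (\<mu> + of_nat l) * (\<mu> - of_nat l - 1)) (bridge_op k v)
        + mscale (- ((\<mu> + of_nat l) * \<mu> * (\<mu> - of_nat l - 1))) v) i j = 0 i j"
      using E1 E2 E3 E4 gap unfolding plus_fun_apply mscale_def zero_fun_apply by algebra
  qed
  finally show ?thesis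
    by (simp add: v_def)
qed

lemma poly_op_shift_prod:
  assumes "is_mat k Z" and "bridge_op k Z = mscale (eigval k l) Z" and "a \<in> {0, 1, 2}"
  shows "poly_op k (shift_prod k l) (mmult k Z (x_mat k a)) = 0"
proof -
  have EFH: "poly_op k (shift_prod k l) (mmult k Z A) = 0" if "A \<in> {E_mat k, F_mat k, H_mat k}" for A
  proof (cases "l = 0")
    case True
    then show ?thesis
      using poly_op_shift_prod_0[OF assms(1) _ that] assms(2) by simp
  qed (use poly_op_shift_prod_pos[OF assms(1,2) that] in simp)
  from assms(3) consider "a = 0" | "a = 1" | "a = 2"
    by blast
  then show ?thesis
    by cases (simp_all only: x_mat_0 x_mat_1 x_mat_2 mmult_linear poly_op_mscale_right poly_op_add_right
        poly_op_diff_right EFH insertI1 insertI2 mscale_zero diff_zero add_0)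
qed
section \<open>The transfer operator on Lagrange polynomials of \<open>\<Omega>\<close>\<close>

lemma transfer_add_fun: "transfer k (\<lambda>Z. T1 Z + T2 Z) Z = transfer k T1 Z + transfer k T2 Z"
  by (simp add: transfer_def mmult_add_left sum.distrib)

lemma transfer_diff_fun: "transfer k (\<lambda>Z. T1 Z - T2 Z) Z = transfer k T1 Z - transfer k T2 Z"
  by (simp add: transfer_def mmult_diff_left sum_subtractf)

lemma transfer_mscale_fun: "transfer k (\<lambda>Z. mscale a (T Z)) Z = mscale a (transfer k T Z)"
  unfolding transfer_def by (simp only: mmult_mscale_left mscale_sum)

lemma transfer_sum_right: "transfer k (poly_op k p) (\<Sum>x\<in>S. f x) = (\<Sum>x\<in>S. transfer k (poly_op k p) (f x))"
  unfolding transfer_def by (simp only: mmult_sum_left poly_op_sum_right) (rule sum.swap)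

lemma transfer_cong:
  "(\<And>a. a \<in> {0, 1, 2} \<Longrightarrow> T1 (mmult k Z (x_mat k a)) = T2 (mmult k Z (x_mat k a))) \<Longrightarrow>
    transfer k T1 Z = transfer k T2 Z"
  unfolding transfer_def by (rule sum.cong) auto

lemma transfer_eq_0:
  "(\<And>a. a \<in> {0, 1, 2} \<Longrightarrow> T (mmult k Z (x_mat k a)) = 0) \<Longrightarrow> transfer k T Z = 0"
  by (simp add: transfer_def)

lemma transfer_pow_add:
  "(transfer k ^^ n) (\<lambda>Z. T1 Z + T2 Z) X = (transfer k ^^ n) T1 X + (transfer k ^^ n) T2 X"
proof (induction n arbitrary: T1 T2)
  case (Suc n)
  have "transfer k (\<lambda>Z. T1 Z + T2 Z) = (\<lambda>Z. transfer k T1 Z + transfer k T2 Z)"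
    by (simp add: fun_eq_iff transfer_add_fun)
  with Suc.IH show ?case
    by (simp add: funpow_Suc_right del: funpow.simps)
qed simp

lemma transfer_pow_diff:
  "(transfer k ^^ n) (\<lambda>Z. T1 Z - T2 Z) X = (transfer k ^^ n) T1 X - (transfer k ^^ n) T2 X"
proof (induction n arbitrary: T1 T2)
  case (Suc n)
  have "transfer k (\<lambda>Z. T1 Z - T2 Z) = (\<lambda>Z. transfer k T1 Z - transfer k T2 Z)"
    by (simp add: fun_eq_iff transfer_diff_fun)
  with Suc.IH show ?case
    by (simp add: funpow_Suc_right del: funpow.simps)
qed simp

lemma transfer_pow_mscale: "(transfer k ^^ n) (\<lambda>Z. mscale a (T Z)) X = mscale a ((transfer k ^^ n) T X)"
proof (induction n arbitrary: T)
  case (Suc n)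
  have "transfer k (\<lambda>Z. mscale a (T Z)) = (\<lambda>Z. mscale a (transfer k T Z))"
    by (simp add: fun_eq_iff transfer_mscale_fun)
  with Suc.IH show ?case
    by (simp add: funpow_Suc_right del: funpow.simps)
qed simp

lemma transfer_pow_cong:
  assumes "\<And>Z. is_mat k Z \<Longrightarrow> T1 Z = T2 Z" and "is_mat k X"
  shows "(transfer k ^^ n) T1 X = (transfer k ^^ n) T2 X"
  using assms(1)
proof (induction n arbitrary: T1 T2)
  case (Suc n)
  have "(transfer k ^^ n) (transfer k T1) X = (transfer k ^^ n) (transfer k T2) X"
    by (rule Suc.IH) (use Suc.prems in \<open>auto simp: transfer_def\<close>)
  then show ?case
    by (simp add: funpow_Suc_right del: funpow.simps)
qed (simp add: assms(2))

lemma transfer_pow_id: "is_mat k X \<Longrightarrow> (transfer k ^^ j) (\<lambda>Z. Z) X = mscale (casimir k ^ j) X"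
proof (induction j)
  case (Suc j)
  have "(transfer k ^^ Suc j) (\<lambda>Z. Z) X = (transfer k ^^ j) (transfer k (\<lambda>Z. Z)) X"
    by (simp add: funpow_Suc_right del: funpow.simps)
  also have "\<dots> = (transfer k ^^ j) (\<lambda>Z. mscale (casimir k) Z) X"
    by (rule transfer_pow_cong) (simp_all add: transfer_id Suc.prems)
  also have "\<dots> = mscale (casimir k ^ Suc j) X"
    using Suc by (simp add: transfer_pow_mscale mscale_mscale)
  finally show ?case .
qed simp

lemma poly_op_eig_prod_Suc_mmult:
  assumes "is_mat k Z" and "poly_op k (eig_prod k j) Z = 0" and "a \<in> {0, 1, 2}"
  shows "poly_op k (eig_prod k (Suc j)) (mmult k Z (x_mat k a)) = 0"
proof -
  let ?Z = "\<lambda>l. poly_op k (lagrange (eigval k) {..j} l) Z"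
  have spectral: "poly_op k (eig_prod k j) Z = 0 \<Longrightarrow>
      poly_op k g Z = (\<Sum>l\<le>j. mscale (poly g (eigval k l)) (?Z l))" for g
    by (rule poly_op_spectral) (simp_all add: eig_prod_def inj_on_eigval)
  have "Z = (\<Sum>l\<le>j. ?Z l)"
    using spectral[of 1] assms(2) by simp
  moreover have "poly_op k (eig_prod k (Suc j)) (mmult k (?Z l) (x_mat k a)) = 0" if "l \<le> j" for l
  proof (rule poly_op_dvd_eq_0)
    show "shift_prod k l dvd eig_prod k (Suc j)"
      unfolding eig_prod_def by (rule shift_prod_dvd_prod) (use that in \<open>auto simp: shift_set_def\<close>)
    have "bridge_op k (?Z l) = mscale (eigval k l) (?Z l)"
      by (rule poly_op_lagrange_eigen) (use assms(2) that in \<open>simp_all add: eig_prod_def inj_on_eigval\<close>)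
    then show "poly_op k (shift_prod k l) (mmult k (?Z l) (x_mat k a)) = 0"
      by (rule poly_op_shift_prod[OF is_mat_poly_op[OF assms(1)] _ assms(3)])
  qed
  ultimately show ?thesis
    by (metis (no_types, lifting) atMost_iff mmult_sum_left poly_op_sum_right sum.neutral)
qed

lemma transfer_pow_eq_0:
  assumes "\<And>Z. is_mat k Z \<Longrightarrow> poly_op k (eig_prod k j) Z = 0 \<Longrightarrow> T Z = 0"
    and "is_mat k X" and "poly_op k (eig_prod k 0) X = 0"
  shows "(transfer k ^^ j) T X = 0"
  using assms(1)
proof (induction j arbitrary: T)
  case 0
  then show ?case
    using assms(2,3) by simp
next
  case (Suc j)
  have "(transfer k ^^ j) (transfer k T) X = 0"
  proof (rule Suc.IH)
    fix Z
    assume "is_mat k Z" and "poly_op k (eig_prod k j) Z = 0"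
    then show "transfer k T Z = 0"
      by (intro transfer_eq_0 Suc.prems) (auto intro: poly_op_eig_prod_Suc_mmult)
  qed
  then show ?case
    by (simp add: funpow_Suc_right del: funpow.simps)
qed

definition top_lagrange :: "nat \<Rightarrow> nat \<Rightarrow> complex poly" where
  "top_lagrange k n = lagrange (eigval k) {..n} n"

lemma poly_top_lagrange: "l \<le> n \<Longrightarrow> poly (top_lagrange k n) (eigval k l) = (if l = n then 1 else 0)"
  unfolding top_lagrange_def by (rule poly_lagrange) (auto simp: inj_on_eigval)

lemma top_lagrange_0: "top_lagrange k 0 = 1"
  by (simp add: top_lagrange_def lagrange_def)

lemma top_lagrange_eq:
  "top_lagrange k n = smult (1 / (\<Prod>l<n. eigval k n - eigval k l)) (\<Prod>l<n. [:- eigval k l, 1:])"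
proof -
  have "{..n} - {n} = {..<n}"
    by auto
  then show ?thesis
    by (simp add: top_lagrange_def lagrange_def)
qed

lemma eig_prod_dvd_top_lagrange: "j < n \<Longrightarrow> eig_prod k j dvd top_lagrange k n"
  unfolding top_lagrange_eq eig_prod_def by (intro dvd_smult prod_dvd_prod_subset) auto

lemma shift_prod_dvd_top_lagrange: "shift_set l \<subseteq> {..<n} \<Longrightarrow> shift_prod k l dvd top_lagrange k n"
  unfolding top_lagrange_eq by (intro dvd_smult shift_prod_dvd_prod) auto

text \<open>Modulo \<open>shift_prod k n\<close>, the Lagrange polynomial \<open>top_lagrange k (Suc n)\<close> agrees with a
  quadratic one.\<close>

definition local_lagrange :: "nat \<Rightarrow> nat \<Rightarrow> complex poly" where
  "local_lagrange k n = smult (1 / ((2 * of_nat n + 1) * (of_nat n + 1)))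
     ([:- (eigval k n + of_nat n), 1:] * [:- eigval k n, 1:])"

definition gamma :: "nat \<Rightarrow> nat \<Rightarrow> complex" where
  "gamma k n = (of_nat n + 1) / (2 * of_nat n + 1) * (casimir k - of_nat (n * (n + 2)) / 4)"

lemma of_nat_add_one_neq_zero: "of_nat n + 1 \<noteq> (0 :: complex)"
  using of_nat_neq_0[of n, where 'a = complex] by (simp only: of_nat_Suc add.commute) simp

lemma poly_local_lagrange:
  assumes "l \<in> shift_set n"
  shows "poly (local_lagrange k n) (eigval k l) = (if l = Suc n then 1 else 0)"
proof -
  have val: "poly (local_lagrange k n) x
      = (x - (eigval k n + of_nat n)) * (x - eigval k n) / ((2 * of_nat n + 1) * (of_nat n + 1))" for x
    by (simp add: local_lagrange_def algebra_simps diff_divide_distrib add_divide_distrib)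
  from assms consider "l = Suc n" | "l = n" | "l = n - 1" "n \<ge> 1"
    by (cases n) (auto simp: shift_set_def)
  then show ?thesis
  proof cases
    case 1
    have "(eigval k l - (eigval k n + of_nat n)) * (eigval k l - eigval k n)
        = (2 * of_nat n + 1) * (of_nat n + 1)"
      by (simp add: 1 eigval_Suc algebra_simps)
    moreover have "(2 * of_nat n + 1) * (of_nat n + 1) \<noteq> (0 :: complex)"
      using of_nat_add_one_neq_zero[of "2 * n"] of_nat_add_one_neq_zero[of n] by simp
    ultimately show ?thesis
      by (simp add: val 1)
  next
    case 3
    then show ?thesis
      using eigval_diff_1[OF 3(2), of k] by (simp add: val)
  qed (simp add: val)
qed

lemma shift_prod_dvd_top_lagrange_diff: "shift_prod k n dvd (top_lagrange k (Suc n) - local_lagrange k n)"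
  unfolding shift_prod_def
proof (rule prod_linear_factors_dvd[OF _ inj_on_eigval])
  show "finite (shift_set n)"
    by (simp add: shift_set_def)
  show "\<forall>l\<in>shift_set n. poly (top_lagrange k (Suc n) - local_lagrange k n) (eigval k l) = 0"
  proof
    fix l
    assume l: "l \<in> shift_set n"
    then have "l \<le> Suc n"
      by (auto simp: shift_set_def)
    with l show "poly (top_lagrange k (Suc n) - local_lagrange k n) (eigval k l) = 0"
      by (simp add: poly_top_lagrange poly_local_lagrange)
  qed
qed

lemma gamma_eq:
  fixes c N \<mu> :: complex
  assumes "2 * N + 1 \<noteq> 0" and "N + 1 \<noteq> 0" and "\<mu> = c - N * (N + 1) / 2"
  shows "((c - 3) * (\<mu> * \<mu>) + \<mu> + c * c - (2 * \<mu> + N) * ((c - 1) * \<mu>) + (\<mu> + N) * \<mu> * c)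
      / ((2 * N + 1) * (N + 1)) = (N + 1) / (2 * N + 1) * (c - N * (N + 2) / 4)"
proof -
  have "(c - 3) * (\<mu> * \<mu>) + \<mu> + c * c - (2 * \<mu> + N) * ((c - 1) * \<mu>) + (\<mu> + N) * \<mu> * c
      = (N + 1) * ((N + 1) * (c - N * (N + 2) / 4))"
    unfolding assms(3) by (simp add: field_simps)
  then have "((c - 3) * (\<mu> * \<mu>) + \<mu> + c * c - (2 * \<mu> + N) * ((c - 1) * \<mu>) + (\<mu> + N) * \<mu> * c)
      / ((2 * N + 1) * (N + 1)) = (N + 1) * ((N + 1) * (c - N * (N + 2) / 4)) / ((N + 1) * (2 * N + 1))"
    by (simp add: mult.commute)
  also have "\<dots> = (N + 1) * (c - N * (N + 2) / 4) / (2 * N + 1)"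
    using assms(2) by (rule nonzero_mult_divide_mult_cancel_left)
  finally show ?thesis
    by simp
qed

lemma transfer_local_lagrange:
  assumes "is_mat k R" and "bridge_op k R = mscale (eigval k n) R"
  shows "transfer k (poly_op k (local_lagrange k n)) R = mscale (gamma k n) R"
proof -
  define \<mu> where "\<mu> = eigval k n"
  define c where "c = casimir k"
  define D :: complex where "D = (2 * of_nat n + 1) * (of_nat n + 1)"
  have nz: "2 * (of_nat n :: complex) + 1 \<noteq> 0" "(of_nat n :: complex) + 1 \<noteq> 0"
    using of_nat_add_one_neq_zero[of "2 * n"] of_nat_add_one_neq_zero[of n] by simp_all
  then have "D \<noteq> 0"
    by (simp add: D_def)
  have "poly_op k (local_lagrange k n) = (\<lambda>Z. mscale (1 / D) (bridge_op k (bridge_op k Z))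
      + mscale (- (2 * \<mu> + of_nat n) / D) (bridge_op k Z) + mscale ((\<mu> + of_nat n) * \<mu> / D) Z)"
    by (rule ext) (simp only: local_lagrange_def poly_op_smult poly_op_mult poly_op_linear_factor,
        simp add: bridge_op_add bridge_op_mscale \<mu>_def D_def,
        simp add: fun_eq_iff mscale_def algebra_simps add_divide_distrib diff_divide_distrib)
  then have "transfer k (poly_op k (local_lagrange k n)) R
      = mscale (1 / D) (transfer k (\<lambda>Z. bridge_op k (bridge_op k Z)) R)
        + mscale (- (2 * \<mu> + of_nat n) / D) (transfer k (bridge_op k) R)
        + mscale ((\<mu> + of_nat n) * \<mu> / D) (transfer k (\<lambda>Z. Z) R)"
    unfolding transfer_def by (simp only: mmult_add_left mmult_mscale_left sum.distrib mscale_sum)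
  also have "\<dots> = mscale (((c - 3) * (\<mu> * \<mu>) + \<mu> + c * c - (2 * \<mu> + of_nat n) * ((c - 1) * \<mu>)
      + (\<mu> + of_nat n) * \<mu> * c) / D) R"
    using assms by (simp add: transfer_id transfer_bridge_op transfer_bridge_op_sq bridge_op_mscale
        mscale_mscale \<mu>_def c_def, simp add: mscale_def fun_eq_iff field_simps power2_eq_square \<open>D \<noteq> 0\<close>)
  also have "\<dots> = mscale (gamma k n) R"
  proof -
    have "\<mu> = c - of_nat n * (of_nat n + 1) / 2"
      by (simp add: \<mu>_def c_def eigval_def algebra_simps)
    moreover have "gamma k n = (of_nat n + 1) / (2 * of_nat n + 1) * (c - of_nat n * (of_nat n + 2) / 4)"
      by (simp add: gamma_def c_def algebra_simps)
    ultimately show ?thesis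
      using gamma_eq[OF nz] by (simp only: D_def)
  qed
  finally show ?thesis .
qed

lemma transfer_top_lagrange_Suc_eigen:
  assumes "is_mat k R" and "bridge_op k R = mscale (eigval k l) R" and "l \<le> n"
  shows "transfer k (poly_op k (top_lagrange k (Suc n))) R = (if l = n then mscale (gamma k n) R else 0)"
proof (cases "l = n")
  case True
  have "transfer k (poly_op k (top_lagrange k (Suc n))) R = transfer k (poly_op k (local_lagrange k n)) R"
  proof (rule transfer_cong)
    fix a :: nat
    assume "a \<in> {0, 1, 2}"
    then have "poly_op k (shift_prod k n) (mmult k R (x_mat k a)) = 0"
      using poly_op_shift_prod[OF assms(1,2)] True by simp
    then have "poly_op k (top_lagrange k (Suc n) - local_lagrange k n) (mmult k R (x_mat k a)) = 0"
      by (rule poly_op_dvd_eq_0[OF shift_prod_dvd_top_lagrange_diff])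
    then show "poly_op k (top_lagrange k (Suc n)) (mmult k R (x_mat k a))
        = poly_op k (local_lagrange k n) (mmult k R (x_mat k a))"
      by (simp add: poly_op_diff)
  qed
  with True show ?thesis
    using transfer_local_lagrange[OF assms(1)] assms(2) by simp
next
  case False
  have "transfer k (poly_op k (top_lagrange k (Suc n))) R = 0"
  proof (rule transfer_eq_0, rule poly_op_dvd_eq_0)
    show "shift_prod k l dvd top_lagrange k (Suc n)"
      by (rule shift_prod_dvd_top_lagrange) (use assms(3) False in \<open>auto simp: shift_set_def\<close>)
  qed (use poly_op_shift_prod[OF assms(1,2)] in simp)
  with False show ?thesis
    by simp
qed

lemma transfer_top_lagrange_Suc:
  assumes "is_mat k R" and "poly_op k (eig_prod k n) R = 0"
  shows "transfer k (poly_op k (top_lagrange k (Suc n))) R = mscale (gamma k n) (poly_op k (top_lagrange k n) R)"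
proof -
  let ?R = "\<lambda>l. poly_op k (lagrange (eigval k) {..n} l) R"
  have spectral: "poly_op k g R = (\<Sum>l\<le>n. mscale (poly g (eigval k l)) (?R l))" for g
    by (rule poly_op_spectral) (use assms(2) in \<open>simp_all add: eig_prod_def inj_on_eigval\<close>)
  have eigen: "bridge_op k (?R l) = mscale (eigval k l) (?R l)" if "l \<le> n" for l
    by (rule poly_op_lagrange_eigen) (use assms(2) that in \<open>simp_all add: eig_prod_def inj_on_eigval\<close>)
  have decomp: "R = (\<Sum>l\<le>n. ?R l)"
    using spectral[of 1] by (simp only: poly_op_one poly_1 mscale_one)
  have "poly_op k (top_lagrange k n) R = (\<Sum>l\<le>n. mscale (poly (top_lagrange k n) (eigval k l)) (?R l))"
    by (rule spectral)
  also have "\<dots> = (\<Sum>l\<le>n. if l = n then ?R l else 0)"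
    by (rule sum.cong) (auto simp: poly_top_lagrange)
  finally have top: "poly_op k (top_lagrange k n) R = ?R n"
    by simp
  have "transfer k (poly_op k (top_lagrange k (Suc n))) R
      = (\<Sum>l\<le>n. transfer k (poly_op k (top_lagrange k (Suc n))) (?R l))"
    by (subst decomp) (rule transfer_sum_right)
  also have "\<dots> = (\<Sum>l\<le>n. if l = n then mscale (gamma k n) (?R l) else 0)"
    by (rule sum.cong) (simp_all add: transfer_top_lagrange_Suc_eigen[OF _ eigen] assms(1))
  finally show ?thesis
    by (simp add: top)
qed

lemma transfer_pow_top_lagrange:
  assumes "is_mat k X" and "poly_op k (eig_prod k 0) X = 0"
  shows "(transfer k ^^ n) (poly_op k (top_lagrange k n)) X = mscale (\<Prod>l<n. gamma k l) X"
proof (induction n)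
  case 0
  then show ?case
    by (simp add: top_lagrange_0)
next
  case (Suc n)
  have "(transfer k ^^ n)
      (\<lambda>Z. transfer k (poly_op k (top_lagrange k (Suc n))) Z - mscale (gamma k n) (poly_op k (top_lagrange k n) Z)) X = 0"
    by (rule transfer_pow_eq_0[OF _ assms]) (simp add: transfer_top_lagrange_Suc)
  then have "(transfer k ^^ Suc n) (poly_op k (top_lagrange k (Suc n))) X
      = (transfer k ^^ n) (\<lambda>Z. mscale (gamma k n) (poly_op k (top_lagrange k n) Z)) X"
    by (simp add: transfer_pow_diff funpow_Suc_right del: funpow.simps)
  with Suc.IH show ?case
    by (simp add: transfer_pow_mscale mscale_mscale mult.commute)
qed

lemma transfer_pow_top_lagrange_below:
  assumes "is_mat k X" and "poly_op k (eig_prod k 0) X = 0" and "j < n"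
  shows "(transfer k ^^ j) (poly_op k (top_lagrange k n)) X = 0"
  by (rule transfer_pow_eq_0[OF _ assms(1,2)]) (rule poly_op_dvd_eq_0[OF eig_prod_dvd_top_lagrange[OF assms(3)]])

section \<open>Closing shares in \<open>V\<^sub>k\<close>\<close>

lemma inj_relL: "inj relL"
  by (auto simp: inj_def relL_def)

lemma inj_relR: "inj relR"
  by (auto simp: inj_def relR_def)

lemma relL_neq_relR: "relL x \<noteq> relR y"
  unfolding relL_def relR_def by presburger

definition interleave :: "(nat \<Rightarrow> 'a) \<Rightarrow> (nat \<Rightarrow> 'a) \<Rightarrow> nat \<Rightarrow> 'a" where
  "interleave \<phi>\<^sub>1 \<phi>\<^sub>2 x = (if even x then \<phi>\<^sub>1 (x div 2) else \<phi>\<^sub>2 (x div 2))"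

lemma interleave_comp [simp]: "interleave \<phi>\<^sub>1 \<phi>\<^sub>2 \<circ> relL = \<phi>\<^sub>1" "interleave \<phi>\<^sub>1 \<phi>\<^sub>2 \<circ> relR = \<phi>\<^sub>2"
  by (auto simp: fun_eq_iff interleave_def relL_def relR_def)

lemma interleave_comp_relL_relR [simp]: "interleave (\<phi> \<circ> relL) (\<phi> \<circ> relR) = \<phi>"
  by (auto simp: fun_eq_iff interleave_def relL_def relR_def)

lemma comp_relL_in_PiE:
  assumes "\<phi> \<in> PiE (relL ` A \<union> relR ` B) (\<lambda>_. S)"
  shows "\<phi> \<circ> relL \<in> PiE A (\<lambda>_. S)"
proof (rule PiE_I)
  fix x
  assume "x \<notin> A"
  then have "relL x \<notin> relL ` A \<union> relR ` B"
    using relL_neq_relR by (auto simp: inj_image_mem_iff[OF inj_relL])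
  then show "(\<phi> \<circ> relL) x = undefined"
    by (simp add: PiE_arb[OF assms])
qed (use assms in \<open>auto intro: PiE_mem\<close>)

lemma comp_relR_in_PiE:
  assumes "\<phi> \<in> PiE (relL ` A \<union> relR ` B) (\<lambda>_. S)"
  shows "\<phi> \<circ> relR \<in> PiE B (\<lambda>_. S)"
proof (rule PiE_I)
  fix x
  assume "x \<notin> B"
  then have "relR x \<notin> relL ` A \<union> relR ` B"
    using relL_neq_relR[symmetric] by (auto simp: inj_image_mem_iff[OF inj_relR])
  then show "(\<phi> \<circ> relR) x = undefined"
    by (simp add: PiE_arb[OF assms])
qed (use assms in \<open>auto intro: PiE_mem\<close>)

lemma interleave_in_PiE:
  assumes "\<phi>\<^sub>1 \<in> PiE A (\<lambda>_. S)" and "\<phi>\<^sub>2 \<in> PiE B (\<lambda>_. S)"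
  shows "interleave \<phi>\<^sub>1 \<phi>\<^sub>2 \<in> PiE (relL ` A \<union> relR ` B) (\<lambda>_. S)"
proof (rule PiE_I)
  fix x
  assume "x \<in> relL ` A \<union> relR ` B"
  with assms show "interleave \<phi>\<^sub>1 \<phi>\<^sub>2 x \<in> S"
    by (auto simp: interleave_def relL_def relR_def)
next
  fix x
  assume x: "x \<notin> relL ` A \<union> relR ` B"
  show "interleave \<phi>\<^sub>1 \<phi>\<^sub>2 x = undefined"
  proof (cases "even x")
    case True
    then have "x = relL (x div 2)"
      by (simp add: relL_def)
    with x True show ?thesis
      by (auto simp: interleave_def intro: PiE_arb[OF assms(1)])
  next
    case False
    then have "x = relR (x div 2)"
      by (simp add: relR_def)
    with x False show ?thesis
      by (auto simp: interleave_def intro: PiE_arb[OF assms(2)])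
  qed
qed

lemma sum_PiE_relL_relR:
  "(\<Sum>\<phi>\<in>PiE (relL ` A \<union> relR ` B) (\<lambda>_. S). F (\<phi> \<circ> relL) (\<phi> \<circ> relR))
    = (\<Sum>\<phi>\<^sub>1\<in>PiE A (\<lambda>_. S). \<Sum>\<phi>\<^sub>2\<in>PiE B (\<lambda>_. S). F \<phi>\<^sub>1 \<phi>\<^sub>2)"
proof -
  have "(\<Sum>\<phi>\<in>PiE (relL ` A \<union> relR ` B) (\<lambda>_. S). F (\<phi> \<circ> relL) (\<phi> \<circ> relR))
      = (\<Sum>(\<phi>\<^sub>1, \<phi>\<^sub>2)\<in>PiE A (\<lambda>_. S) \<times> PiE B (\<lambda>_. S). F \<phi>\<^sub>1 \<phi>\<^sub>2)"
  proof (rule sum.reindex_bij_witness[where j = "\<lambda>\<phi>. (\<phi> \<circ> relL, \<phi> \<circ> relR)" and i = "case_prod interleave"])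
    show "(\<phi> \<circ> relL, \<phi> \<circ> relR) \<in> PiE A (\<lambda>_. S) \<times> PiE B (\<lambda>_. S)"
      if "\<phi> \<in> PiE (relL ` A \<union> relR ` B) (\<lambda>_. S)" for \<phi>
      using that by (simp add: comp_relL_in_PiE comp_relR_in_PiE)
    show "case_prod interleave p \<in> PiE (relL ` A \<union> relR ` B) (\<lambda>_. S)"
      if "p \<in> PiE A (\<lambda>_. S) \<times> PiE B (\<lambda>_. S)" for p
      using that by (cases p) (simp add: interleave_in_PiE)
  qed (auto split: prod.split)
  then show ?thesis
    by (simp add: sum.cartesian_product)
qed

lemma case_nat_0_Suc: "case_nat (f 0) (f \<circ> Suc) = f"
  by (auto simp: fun_eq_iff split: nat.split)

lemma sum_PiE_insert_0_Suc:
  "(\<Sum>\<phi>\<in>PiE (insert 0 (Suc ` L)) (\<lambda>_. S). G \<phi>) = (\<Sum>a\<in>S. \<Sum>\<psi>\<in>PiE L (\<lambda>_. S). G (case_nat a \<psi>))"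
proof -
  have "(\<Sum>\<phi>\<in>PiE (insert 0 (Suc ` L)) (\<lambda>_. S). G \<phi>) = (\<Sum>(a, \<psi>)\<in>S \<times> PiE L (\<lambda>_. S). G (case_nat a \<psi>))"
  proof (rule sum.reindex_bij_witness[where j = "\<lambda>\<phi>. (\<phi> 0, \<phi> \<circ> Suc)" and i = "\<lambda>(a, \<psi>). case_nat a \<psi>"])
    fix \<phi>
    assume \<phi>: "\<phi> \<in> PiE (insert 0 (Suc ` L)) (\<lambda>_. S)"
    show "(\<phi> 0, \<phi> \<circ> Suc) \<in> S \<times> PiE L (\<lambda>_. S)"
      using \<phi> by (auto simp: PiE_iff extensional_def)
  next
    fix p
    assume "p \<in> S \<times> PiE L (\<lambda>_. S)"
    then show "(case p of (a, \<psi>) \<Rightarrow> case_nat a \<psi>) \<in> PiE (insert 0 (Suc ` L)) (\<lambda>_. S)"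
      by (auto simp: PiE_iff extensional_def inj_image_mem_iff split: nat.split)
  qed (auto simp: case_nat_0_Suc)
  then show ?thesis
    by (simp add: sum.cartesian_product)
qed

fun colored_word :: "nat \<Rightarrow> (nat \<Rightarrow> nat) \<Rightarrow> nat list \<Rightarrow> cmat" where
  "colored_word k \<phi> [] = mone k"
| "colored_word k \<phi> (l # w) = mmult k (x_mat k (\<phi> l)) (colored_word k \<phi> w)"

lemma is_mat_colored_word [simp]: "is_mat k (colored_word k \<phi> w)"
  by (cases w) auto

lemma wordmat_eq_colored_word: "i \<le> k \<Longrightarrow> j \<le> k \<Longrightarrow> wordmat k \<phi> w i j = colored_word k \<phi> w i j"
proof (induction w arbitrary: i)
  case (Cons l w)
  have "wordmat k \<phi> (l # w) i j = (\<Sum>m\<le>k. x_mat k (\<phi> l) i m * colored_word k \<phi> w m j)"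
    by simp (rule sum.cong, use Cons in \<open>auto simp: x_mat_def\<close>)
  with Cons.prems show ?case
    by (simp add: mmult_def)
qed (simp add: mone_def)

lemma colored_word_append: "colored_word k \<phi> (u @ w) = mmult k (colored_word k \<phi> u) (colored_word k \<phi> w)"
  by (induction u) (simp_all add: mmult_mone_left mmult_assoc)

lemma colored_word_map: "colored_word k \<phi> (map f w) = colored_word k (\<phi> \<circ> f) w"
  by (induction w) simp_all

definition chords :: "share \<Rightarrow> nat set" where
  "chords s = set (fst s) \<union> set (snd s)"

lemma finite_chords [simp]: "finite (chords s)"
  by (simp add: chords_def)

abbreviation colours :: "nat \<Rightarrow> nat set" where
  "colours \<equiv> \<lambda>_. {0, 1, 2}"

text \<open>A share \<open>H\<close> closed against a matrix \<open>X\<close> standing for the rest of the diagram; a share \<open>s\<close>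
  closed up through a linear map \<open>T\<close> and traced; and the map \<open>T\<close> pushed through a share \<open>s\<close>.\<close>

definition share_op :: "nat \<Rightarrow> share \<Rightarrow> cmat \<Rightarrow> cmat" where
  "share_op k s X =
     (\<Sum>\<phi>\<in>PiE (chords s) colours. mmult k (colored_word k \<phi> (fst s)) (mmult k X (colored_word k \<phi> (snd s))))"

definition share_trace :: "nat \<Rightarrow> share \<Rightarrow> (cmat \<Rightarrow> cmat) \<Rightarrow> complex" where
  "share_trace k s T =
     (\<Sum>\<phi>\<in>PiE (chords s) colours. mtrace k (mmult k (T (colored_word k \<phi> (snd s))) (colored_word k \<phi> (fst s))))"

definition share_transfer :: "nat \<Rightarrow> share \<Rightarrow> (cmat \<Rightarrow> cmat) \<Rightarrow> cmat \<Rightarrow> cmat" where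
  "share_transfer k s T X =
     (\<Sum>\<phi>\<in>PiE (chords s) colours. mmult k (T (mmult k X (colored_word k \<phi> (snd s)))) (colored_word k \<phi> (fst s)))"

lemma chords_cross: "chords (cross I H) = relL ` chords I \<union> relR ` chords H"
  by (auto simp: chords_def cross_def)

lemma set_join: "set (join I H) = relL ` chords I \<union> relR ` chords H"
  by (auto simp: chords_def join_def)

lemma trace_wsl2_join: "(\<Sum>r\<le>k. wsl2 k (join I H) r r) = share_trace k I (share_op k H)"
proof -
  let ?W = "colored_word k"
  have "(\<Sum>r\<le>k. wsl2 k (join I H) r r) = (\<Sum>\<phi>\<in>PiE (set (join I H)) colours. mtrace k (?W \<phi> (join I H)))"
    unfolding wsl2_def mtrace_def by (subst sum.swap) (auto intro!: sum.cong simp: wordmat_eq_colored_word)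
  also have "\<dots> = (\<Sum>\<phi>\<in>PiE (relL ` chords I \<union> relR ` chords H) colours.
      mtrace k (mmult k (?W (\<phi> \<circ> relL) (fst I)) (mmult k (?W (\<phi> \<circ> relR) (fst H))
         (mmult k (?W (\<phi> \<circ> relL) (snd I)) (?W (\<phi> \<circ> relR) (snd H))))))"
    unfolding set_join by (simp add: join_def colored_word_append colored_word_map)
  also have "\<dots> = (\<Sum>\<phi>\<^sub>1\<in>PiE (chords I) colours. \<Sum>\<phi>\<^sub>2\<in>PiE (chords H) colours.
      mtrace k (mmult k (?W \<phi>\<^sub>1 (fst I)) (mmult k (?W \<phi>\<^sub>2 (fst H))
         (mmult k (?W \<phi>\<^sub>1 (snd I)) (?W \<phi>\<^sub>2 (snd H))))))"
    by (rule sum_PiE_relL_relR[where F = "\<lambda>\<phi>\<^sub>1 \<phi>\<^sub>2. mtrace k (mmult k (?W \<phi>\<^sub>1 (fst I))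
      (mmult k (?W \<phi>\<^sub>2 (fst H)) (mmult k (?W \<phi>\<^sub>1 (snd I)) (?W \<phi>\<^sub>2 (snd H)))))"])
  also have "\<dots> = (\<Sum>\<phi>\<^sub>1\<in>PiE (chords I) colours. \<Sum>\<phi>\<^sub>2\<in>PiE (chords H) colours.
      mtrace k (mmult k (mmult k (?W \<phi>\<^sub>2 (fst H)) (mmult k (?W \<phi>\<^sub>1 (snd I)) (?W \<phi>\<^sub>2 (snd H)))) (?W \<phi>\<^sub>1 (fst I))))"
    by (simp add: mtrace_mmult_commute[of k "?W _ (fst I)"])
  also have "\<dots> = share_trace k I (share_op k H)"
    by (simp add: share_trace_def share_op_def mmult_sum_left mtrace_sum)
  finally show ?thesis .
qed

lemma share_op_cross: "share_op k (cross I H) X = share_op k I (share_op k H X)"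
proof -
  let ?W = "colored_word k"
  have "share_op k (cross I H) X = (\<Sum>\<phi>\<in>PiE (relL ` chords I \<union> relR ` chords H) colours.
      mmult k (mmult k (?W (\<phi> \<circ> relL) (fst I)) (?W (\<phi> \<circ> relR) (fst H)))
        (mmult k X (mmult k (?W (\<phi> \<circ> relR) (snd H)) (?W (\<phi> \<circ> relL) (snd I)))))"
    unfolding share_op_def chords_cross by (simp add: cross_def colored_word_append colored_word_map)
  also have "\<dots> = (\<Sum>\<phi>\<^sub>1\<in>PiE (chords I) colours. \<Sum>\<phi>\<^sub>2\<in>PiE (chords H) colours.
      mmult k (mmult k (?W \<phi>\<^sub>1 (fst I)) (?W \<phi>\<^sub>2 (fst H))) (mmult k X (mmult k (?W \<phi>\<^sub>2 (snd H)) (?W \<phi>\<^sub>1 (snd I)))))"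
    by (rule sum_PiE_relL_relR[where F = "\<lambda>\<phi>\<^sub>1 \<phi>\<^sub>2. mmult k (mmult k (?W \<phi>\<^sub>1 (fst I)) (?W \<phi>\<^sub>2 (fst H)))
        (mmult k X (mmult k (?W \<phi>\<^sub>2 (snd H)) (?W \<phi>\<^sub>1 (snd I))))"])
  also have "\<dots> = share_op k I (share_op k H X)"
    by (simp add: share_op_def mmult_sum_left mmult_sum_right mmult_assoc)
  finally show ?thesis .
qed

lemma share_trace_cross: "share_trace k (cross I H) T = share_trace k H (share_transfer k I T)"
proof -
  let ?W = "colored_word k"
  have "share_trace k (cross I H) T = (\<Sum>\<phi>\<in>PiE (relL ` chords I \<union> relR ` chords H) colours.
      mtrace k (mmult k (T (mmult k (?W (\<phi> \<circ> relR) (snd H)) (?W (\<phi> \<circ> relL) (snd I))))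
        (mmult k (?W (\<phi> \<circ> relL) (fst I)) (?W (\<phi> \<circ> relR) (fst H)))))"
    unfolding share_trace_def chords_cross by (simp add: cross_def colored_word_append colored_word_map)
  also have "\<dots> = (\<Sum>\<phi>\<^sub>1\<in>PiE (chords I) colours. \<Sum>\<phi>\<^sub>2\<in>PiE (chords H) colours.
      mtrace k (mmult k (T (mmult k (?W \<phi>\<^sub>2 (snd H)) (?W \<phi>\<^sub>1 (snd I)))) (mmult k (?W \<phi>\<^sub>1 (fst I)) (?W \<phi>\<^sub>2 (fst H)))))"
    by (rule sum_PiE_relL_relR[where F = "\<lambda>\<phi>\<^sub>1 \<phi>\<^sub>2. mtrace k (mmult k (T (mmult k (?W \<phi>\<^sub>2 (snd H)) (?W \<phi>\<^sub>1 (snd I))))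
        (mmult k (?W \<phi>\<^sub>1 (fst I)) (?W \<phi>\<^sub>2 (fst H))))"])
  also have "\<dots> = (\<Sum>\<phi>\<^sub>2\<in>PiE (chords H) colours. \<Sum>\<phi>\<^sub>1\<in>PiE (chords I) colours.
      mtrace k (mmult k (mmult k (T (mmult k (?W \<phi>\<^sub>2 (snd H)) (?W \<phi>\<^sub>1 (snd I)))) (?W \<phi>\<^sub>1 (fst I))) (?W \<phi>\<^sub>2 (fst H))))"
    by (subst sum.swap) (simp add: mmult_assoc)
  also have "\<dots> = share_trace k H (share_transfer k I T)"
    by (simp add: share_trace_def share_transfer_def mmult_sum_left mtrace_sum)
  finally show ?thesis .
qed

lemma chords_Ush: "chords (Ush I) = insert 0 (Suc ` chords I)"
  by (auto simp: chords_def Ush_def)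

text \<open>The arch added by \<open>U\<close> encloses the strand of \<open>I\<close>; by cyclicity of the trace it becomes a bridge
  on the other side.\<close>

lemma share_trace_Ush: "share_trace k (Ush I) T = share_trace k I (\<lambda>X. bridge_op k (T X))"
proof -
  let ?W = "colored_word k"
  have cyclic: "mtrace k (mmult k A (mmult k (x_mat k a) (mmult k B (x_mat k a))))
      = mtrace k (mmult k (mmult k (x_mat k a) (mmult k A (x_mat k a))) B)" for A B a
    by (metis mmult_assoc mtrace_mmult_commute)
  have "share_trace k (Ush I) T = (\<Sum>a\<in>{0, 1, 2}. \<Sum>\<psi>\<in>PiE (chords I) colours.
      mtrace k (mmult k (T (?W \<psi> (snd I))) (mmult k (x_mat k a) (mmult k (?W \<psi> (fst I)) (x_mat k a)))))"
    unfolding share_trace_def chords_Ush sum_PiE_insert_0_Suc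
    by (simp add: Ush_def colored_word_append colored_word_map mmult_mone_right comp_def)
  also have "\<dots> = share_trace k I (\<lambda>X. bridge_op k (T X))"
    by (subst sum.swap) (simp only: cyclic share_trace_def bridge_op_def mmult_sum_left mtrace_sum)
  finally show ?thesis .
qed

lemma chords_empty: "chords ([], []) = {}"
  by (simp add: chords_def)

lemma chords_single: "chords bridge = insert 0 (Suc ` {})" "chords arch = insert 0 (Suc ` {})"
  by (simp_all add: chords_def bridge_def arch_def)

lemma share_op_empty: "is_mat k X \<Longrightarrow> share_op k ([], []) X = X"
  by (simp add: share_op_def chords_empty mmult_mone_left mmult_mone_right)

lemma share_trace_empty: "share_trace k ([], []) T = mtrace k (T (mone k))"
  by (simp add: share_trace_def chords_empty mtrace_mmult_mone)

lemma share_op_bridge: "share_op k bridge X = bridge_op k X"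
  unfolding share_op_def chords_single sum_PiE_insert_0_Suc
  by (simp add: bridge_def mmult_mone_right bridge_op_def)

lemma share_transfer_bridge: "share_transfer k bridge T X = transfer k T X"
  unfolding share_transfer_def chords_single sum_PiE_insert_0_Suc
  by (simp add: bridge_def mmult_mone_right transfer_def)

lemma share_op_arch:
  assumes "is_mat k X"
  shows "share_op k arch X = mscale (casimir k) X"
proof -
  have squares: "(\<Sum>a\<in>{0, 1, 2}. mmult k (x_mat k a) (x_mat k a)) = mscale (casimir k) (mone k)"
    using bridge_op_mone[of k] by (simp only: bridge_op_def mmult_mone_left is_mat_x_mat)
  have "share_op k arch X = (\<Sum>a\<in>{0, 1, 2}. mmult k (mmult k (x_mat k a) (x_mat k a)) X)"
    unfolding share_op_def chords_single sum_PiE_insert_0_Suc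
    using assms by (simp add: arch_def mmult_mone_right mmult_assoc)
  also have "\<dots> = mmult k (mscale (casimir k) (mone k)) X"
    by (simp only: mmult_sum_left[symmetric] squares)
  finally show ?thesis
    using assms by (simp add: mmult_mscale_left mmult_mone_left)
qed

lemma snd_cross_pow_arch: "snd (cross_pow arch i) = []"
  by (induction i) (simp_all add: cross_def arch_def)

lemma share_op_arch_pow: "is_mat k X \<Longrightarrow> share_op k (cross_pow arch i) X = mscale (casimir k ^ i) X"
  by (induction i arbitrary: X) (simp_all add: share_op_empty share_op_cross share_op_arch mscale_mscale)

lemma share_transfer_arch_pow:
  assumes "is_mat k X" and "is_mat k (T X)"
  shows "share_transfer k (cross_pow arch i) T X = mscale (casimir k ^ i) (T X)"
proof -
  have "share_transfer k (cross_pow arch i) T X = mmult k (T X) (share_op k (cross_pow arch i) (mone k))"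
    using assms by (simp add: share_transfer_def share_op_def snd_cross_pow_arch mmult_mone_left
        mmult_mone_right mmult_sum_right)
  with assms show ?thesis
    by (simp add: share_op_arch_pow mmult_mscale_right mmult_mone_right)
qed

lemma share_op_bridge_pow: "is_mat k X \<Longrightarrow> share_op k (cross_pow bridge m) X = (bridge_op k ^^ m) X"
  by (induction m arbitrary: X) (simp_all add: share_op_empty share_op_cross share_op_bridge)

lemma share_trace_bridge_pow: "share_trace k (cross_pow bridge j) T = mtrace k ((transfer k ^^ j) T (mone k))"
proof (induction j arbitrary: T)
  case (Suc j)
  have "share_trace k (cross_pow bridge (Suc j)) T = share_trace k (cross_pow bridge j) (transfer k T)"
    by (simp add: share_trace_cross share_transfer_bridge[abs_def])
  with Suc.IH show ?case
    by (simp add: funpow_Suc_right del: funpow.simps)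
qed (simp add: share_trace_empty)

lemma share_trace_cong: "(\<And>X. is_mat k X \<Longrightarrow> T1 X = T2 X) \<Longrightarrow> share_trace k s T1 = share_trace k s T2"
  unfolding share_trace_def by (rule sum.cong) simp_all

text \<open>\<open>bridge_pairing k p j\<close> is the trace in \<open>V\<^sub>k\<close> of \<open>y\<^sup>j\<close> closed up against \<open>p(\<Omega>)\<close>.\<close>

definition bridge_pairing :: "nat \<Rightarrow> complex poly \<Rightarrow> nat \<Rightarrow> complex" where
  "bridge_pairing k p j = mtrace k ((transfer k ^^ j) (poly_op k p) (mone k))"

lemma share_trace_mono: "share_trace k (mono i j) (poly_op k p) = casimir k ^ i * bridge_pairing k p j"
proof -
  have "share_trace k (mono i j) (poly_op k p)
      = mtrace k ((transfer k ^^ j) (share_transfer k (cross_pow arch i) (poly_op k p)) (mone k))"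
    by (simp add: mono_def share_trace_cross share_trace_bridge_pow)
  also have "(transfer k ^^ j) (share_transfer k (cross_pow arch i) (poly_op k p)) (mone k)
      = (transfer k ^^ j) (\<lambda>X. mscale (casimir k ^ i) (poly_op k p X)) (mone k)"
    by (rule transfer_pow_cong) (simp_all add: share_transfer_arch_pow)
  finally show ?thesis
    by (simp add: transfer_pow_mscale mtrace_mscale bridge_pairing_def)
qed

lemma is_share_cross: "is_share I \<Longrightarrow> is_share H \<Longrightarrow> is_share (cross I H)"
  unfolding is_share_def
proof
  fix l
  assume I: "\<forall>l. count_list (fst I @ snd I) l \<in> {0, 2}" and H: "\<forall>l. count_list (fst H @ snd H) l \<in> {0, 2}"
  have count_relL: "count_list (map relL xs) (relL y) = count_list xs y"
    and count_relR: "count_list (map relR xs) (relR y) = count_list xs y" for xs y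
    by (simp_all add: count_list_map_conv inj_relL inj_relR)
  have count_disj: "count_list (map relL xs) (relR y) = 0" "count_list (map relR xs) (relL y) = 0" for xs y
    using relL_neq_relR relL_neq_relR[symmetric] by (auto simp: count_list_0_iff)
  consider y where "l = relL y" | y where "l = relR y"
    by (metis relL_def relR_def oddE evenE)
  then show "count_list (fst (cross I H) @ snd (cross I H)) l \<in> {0, 2}"
    by cases (use I H in \<open>auto simp: cross_def count_relL count_relR count_disj add.commute\<close>)
qed

lemma is_share_bridge_pow: "is_share (cross_pow bridge m)"
proof (induction m)
  case (Suc m)
  have "is_share bridge"
    by (simp add: is_share_def bridge_def)
  with Suc show ?case
    by (simp add: is_share_cross)
qed (simp add: is_share_def)

section \<open>The eigen-equation of \<open>e\<^sub>n\<close>, evaluated in \<open>V\<^sub>k\<close>\<close>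

definition closed_trace :: "nat \<Rightarrow> comb \<Rightarrow> (cmat \<Rightarrow> cmat) \<Rightarrow> complex" where
  "closed_trace k X T = (\<Sum>(a, I)\<leftarrow>X. a * share_trace k I T)"

lemma trace_cls: "is_share H \<Longrightarrow> (\<Sum>r\<le>k. cls X H k r r) = closed_trace k X (share_op k H)"
proof (induction X)
  case (Cons x X)
  then show ?case
    by (cases x) (simp add: cls_def closed_trace_def sum.distrib trace_wsl2_join flip: sum_distrib_left)
qed (simp add: cls_def closed_trace_def)

lemma closed_trace_Uop: "closed_trace k (Uop X) T = closed_trace k X (\<lambda>Z. bridge_op k (T Z))"
  by (induction X) (auto simp: closed_trace_def Uop_def share_trace_Ush)

lemma closed_trace_cong:
  "(\<And>Z. is_mat k Z \<Longrightarrow> T1 Z = T2 Z) \<Longrightarrow> closed_trace k X T1 = closed_trace k X T2"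
  unfolding closed_trace_def by (metis (no_types, lifting) share_trace_cong)

lemma sum_list_concat: "sum_list (concat xss) = sum_list (map sum_list xss)"
  by (induction xss) simp_all

lemma closed_trace_realize:
  "closed_trace k (realize q) (poly_op k p) = (\<Sum>j\<le>degree q. poly (coeff q j) (casimir k) * bridge_pairing k p j)"
proof -
  have "closed_trace k (realize q) (poly_op k p) = (\<Sum>j<Suc (degree q). \<Sum>i<Suc (degree (coeff q j)).
      coeff (coeff q j) i * (casimir k ^ i * bridge_pairing k p j))"
    by (simp add: closed_trace_def realize_def sum_list_concat map_concat comp_def share_trace_mono
        interv_sum_list_conv_sum_set_nat atLeast0LessThan)
  then show ?thesis
    by (simp only: lessThan_Suc_atMost poly_altdef sum_distrib_right mult.assoc)
qed

lemma closed_trace_realize_smult: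
  assumes "P \<noteq> 0"
  shows "closed_trace k (realize (smult P q)) (poly_op k p) = poly P (casimir k) * closed_trace k (realize q) (poly_op k p)"
  using assms by (simp add: closed_trace_realize sum_distrib_left mult.assoc)

lemma bridge_pairing_add: "bridge_pairing k (p + q) j = bridge_pairing k p j + bridge_pairing k q j"
proof -
  have "poly_op k (p + q) = (\<lambda>Z. poly_op k p Z + poly_op k q Z)"
    by (simp add: fun_eq_iff poly_op_add)
  then show ?thesis
    by (simp add: bridge_pairing_def transfer_pow_add mtrace_add)
qed

lemma bridge_pairing_smult: "bridge_pairing k (smult a p) j = a * bridge_pairing k p j"
proof -
  have "poly_op k (smult a p) = (\<lambda>Z. mscale a (poly_op k p Z))"
    by (simp add: fun_eq_iff poly_op_smult)
  then show ?thesis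
    by (simp add: bridge_pairing_def transfer_pow_mscale mtrace_mscale)
qed

lemma bridge_pairing_one: "bridge_pairing k 1 j = casimir k ^ j * of_nat (k + 1)"
proof -
  have "poly_op k 1 = (\<lambda>Z. Z)"
    by (simp add: fun_eq_iff)
  then show ?thesis
    by (simp add: bridge_pairing_def transfer_pow_id mtrace_mscale mtrace_mone)
qed

lemma bridge_pairing_top_lagrange:
  assumes "j \<le> n"
  shows "bridge_pairing k (top_lagrange k n) j = (if j = n then (\<Prod>l<n. gamma k l) * of_nat (k + 1) else 0)"
proof (cases "j = n")
  case True
  then show ?thesis
    by (simp add: bridge_pairing_def transfer_pow_top_lagrange[OF is_mat_mone poly_op_mone_eig_prod_0]
        mtrace_mscale mtrace_mone)
next
  case False
  with assms show ?thesis
    by (simp add: bridge_pairing_def transfer_pow_top_lagrange_below[OF is_mat_mone poly_op_mone_eig_prod_0]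
        mtrace_def)
qed

lemma linear_functional_poly:
  fixes L :: "'a :: comm_ring_1 poly \<Rightarrow> 'a"
  assumes add: "\<And>p q. L (p + q) = L p + L q" and smult: "\<And>a p. L (smult a p) = a * L p"
    and shift: "\<And>m. L (monom 1 (Suc m)) = x * L (monom 1 m)"
  shows "L p = poly p x * L 1"
proof -
  have "L (monom 1 i) = x ^ i * L 1" for i
    by (induction i) (simp_all add: shift one_pCons[symmetric] monom_0)
  moreover have "L (\<Sum>i\<in>A. f i) = (\<Sum>i\<in>A. L (f i))" for A and f :: "nat \<Rightarrow> 'a poly"
    using smult[of 0 0] add by (induction A rule: infinite_finite_induct) simp_all
  ultimately have "L (\<Sum>i\<le>degree p. smult (coeff p i) (monom 1 i)) = poly p x * L 1"
    by (simp add: smult poly_altdef sum_distrib_right mult.assoc)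
  then show ?thesis
    by (simp add: smult_monom poly_as_sum_of_monoms)
qed

context
  fixes n :: nat and q :: "complex poly poly"
  assumes eigen: "cls (Uop (realize q)) = cls (realize (smult [:- of_nat (n * (n + 1)) / 2, 1:] q))"
begin

lemma closed_trace_realize_shift:
  "closed_trace k (realize q) (poly_op k (monom 1 (Suc m)))
    = eigval k n * closed_trace k (realize q) (poly_op k (monom 1 m))"
proof -
  let ?H = "cross_pow bridge m"
  have "(\<Sum>r\<le>k. cls (Uop (realize q)) ?H k r r)
      = (\<Sum>r\<le>k. cls (realize (smult [:- of_nat (n * (n + 1)) / 2, 1:] q)) ?H k r r)"
    using eigen by simp
  moreover have "closed_trace k X (share_op k ?H) = closed_trace k X (poly_op k (monom 1 m))" for X
    by (rule closed_trace_cong) (simp add: share_op_bridge_pow poly_op_monom)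
  moreover have "closed_trace k X (\<lambda>Z. bridge_op k (share_op k ?H Z))
      = closed_trace k X (poly_op k (monom 1 (Suc m)))" for X
    by (rule closed_trace_cong) (simp add: share_op_bridge_pow poly_op_monom)
  moreover have "poly [:- of_nat (n * (n + 1)) / 2, 1:] (casimir k) = eigval k n"
    by (simp add: eigval_def field_simps)
  ultimately show ?thesis
    by (simp add: trace_cls[OF is_share_bridge_pow] closed_trace_Uop closed_trace_realize_smult)
qed

lemma closed_trace_realize_eval:
  "closed_trace k (realize q) (poly_op k p) = poly p (eigval k n) * closed_trace k (realize q) (poly_op k 1)"
proof (rule linear_functional_poly[where L = "\<lambda>p. closed_trace k (realize q) (poly_op k p)"])
  show "closed_trace k (realize q) (poly_op k (p\<^sub>1 + p\<^sub>2))
      = closed_trace k (realize q) (poly_op k p\<^sub>1) + closed_trace k (realize q) (poly_op k p\<^sub>2)" for p\<^sub>1 p\<^sub>2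
    by (simp add: closed_trace_realize bridge_pairing_add distrib_left sum.distrib)
  show "closed_trace k (realize q) (poly_op k (smult a p)) = a * closed_trace k (realize q) (poly_op k p)" for a p
    by (simp add: closed_trace_realize bridge_pairing_smult sum_distrib_left algebra_simps)
qed (rule closed_trace_realize_shift)

lemma eval_at_casimir:
  assumes "degree q = n" and "lead_coeff q = 1"
  shows "poly (poly q [:0, 1:]) (casimir k) = (\<Prod>l<n. gamma k l)"
proof -
  have "closed_trace k (realize q) (poly_op k 1) = of_nat (k + 1) * poly (poly q [:0, 1:]) (casimir k)"
    by (simp add: closed_trace_realize bridge_pairing_one poly_altdef[of q] poly_sum poly_power
        sum_distrib_left algebra_simps)
  moreover have "closed_trace k (realize q) (poly_op k (top_lagrange k n)) = of_nat (k + 1) * (\<Prod>l<n. gamma k l)"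
    using assms by (simp add: closed_trace_realize bridge_pairing_top_lagrange if_distrib cong: if_cong)
  moreover have "poly (top_lagrange k n) (eigval k n) = 1"
    by (simp add: poly_top_lagrange)
  ultimately have "of_nat (k + 1) * poly (poly q [:0, 1:]) (casimir k) = of_nat (k + 1) * (\<Prod>l<n. gamma k l)"
    using closed_trace_realize_eval[of k "top_lagrange k n"] by simp
  then show ?thesis
    by (simp only: mult_cancel_left of_nat_eq_0_iff) simp
qed

end

section \<open>The product formula\<close>

lemma prod_gamma_factors:
  fixes x :: complex
  shows "(\<Prod>l<n. (of_nat l + 1) / (2 * of_nat l + 1) * (x - of_nat (l * (l + 2)) / 4))
    = fact n / of_nat (\<Prod>i = 1..n. 2 * i - 1) * (\<Prod>m = 1..n. x - ((of_nat m)^2 - 1) / 4)"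
proof (induction n)
  case (Suc n)
  have "(of_nat (\<Prod>i = 1..n. 2 * i - 1) :: complex) \<noteq> 0"
    by (simp only: of_nat_eq_0_iff prod_zero_iff) auto
  moreover have "2 * (of_nat n :: complex) + 1 \<noteq> 0"
    using of_nat_add_one_neq_zero[of "2 * n"] by simp
  moreover have "(\<Prod>i = 1..Suc n. 2 * i - 1) = (\<Prod>i = 1..n. 2 * i - 1) * (2 * n + 1)"
    by (simp add: prod.cl_ivl_Suc)
  moreover have "(\<Prod>m = 1..Suc n. x - ((of_nat m)^2 - 1) / 4)
      = (\<Prod>m = 1..n. x - ((of_nat m)^2 - 1) / 4) * (x - ((of_nat (Suc n))^2 - 1) / 4)"
    by (simp add: prod.cl_ivl_Suc)
  moreover have "(of_nat (Suc n))^2 - 1 = (of_nat (n * (n + 2)) :: complex)"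
    by (simp add: power2_eq_square algebra_simps)
  ultimately show ?case
    unfolding prod.lessThan_Suc Suc.IH fact_Suc by (simp add: field_simps)
qed simp

lemma prod_gamma_eq:
  "(\<Prod>l<n. gamma k l) = poly (smult (fact n / of_nat (\<Prod>i = 1..n. 2 * i - 1))
     (\<Prod>m = 1..n. [:- ((of_nat m)^2 - 1) / 4, 1:])) (casimir k)"
proof -
  have poly_linear: "poly [:a, 1:] x = a + x" for a x :: complex
    by simp
  have "(\<Prod>l<n. gamma k l)
      = fact n / of_nat (\<Prod>i = 1..n. 2 * i - 1) * (\<Prod>m = 1..n. casimir k - ((of_nat m)^2 - 1) / 4)"
    unfolding gamma_def by (rule prod_gamma_factors)
  also have "(\<Prod>m = 1..n. casimir k - ((of_nat m)^2 - 1) / 4) = (\<Prod>m = 1..n. - ((of_nat m)^2 - 1) / 4 + casimir k)"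
    by (rule prod.cong) (simp_all add: field_simps)
  finally show ?thesis
    by (simp only: poly_smult poly_prod poly_linear)
qed

lemma inj_casimir: "inj casimir"
proof (rule injI)
  fix k k'
  assume "casimir k = casimir k'"
  then have "k * (k + 2) = k' * (k' + 2)"
    by (simp add: casimir_def del: of_nat_mult of_nat_add)
  then show "k = k'"
    by (rule injD[OF inj_mult_self_add])
qed

lemma poly_eq_if_infinite_agree:
  fixes p q :: "'a :: idom poly"
  assumes "infinite {x. poly p x = poly q x}"
  shows "p = q"
proof (rule ccontr)
  assume "p \<noteq> q"
  then have "finite {x. poly (p - q) x = 0}"
    by (intro poly_roots_finite) simp
  with assms show False
    by simp
qed

theorem lemma13:
  fixes n :: nat and q :: "complex poly poly"
  assumes "degree q = n" and "lead_coeff q = 1"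
    and "cls (Uop (realize q)) = cls (realize (smult [:- of_nat (n * (n + 1)) / 2, 1:] q))"
  shows "poly q [:0, 1:] =
    smult (fact n / of_nat (\<Prod>i = 1..n. 2 * i - 1))
          (\<Prod>m = 1..n. [:- ((of_nat m)^2 - 1) / 4, 1:])"
proof (rule poly_eq_if_infinite_agree)
  let ?agree = "{x. poly (poly q [:0, 1:]) x = poly (smult (fact n / of_nat (\<Prod>i = 1..n. 2 * i - 1))
    (\<Prod>m = 1..n. [:- ((of_nat m)^2 - 1) / 4, 1:])) x}"
  have "poly (poly q [:0, 1:]) (casimir k) = poly (smult (fact n / of_nat (\<Prod>i = 1..n. 2 * i - 1))
      (\<Prod>m = 1..n. [:- ((of_nat m)^2 - 1) / 4, 1:])) (casimir k)" for k
    by (rule trans[OF eval_at_casimir[OF assms(3,1,2)] prod_gamma_eq])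
  then have "range casimir \<subseteq> ?agree"
    by blast
  moreover have "infinite (range casimir)"
    using inj_casimir by (rule range_inj_infinite)
  ultimately show "infinite ?agree"
    by (rule infinite_super)
qed

end
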